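(* Let $d \geq 1$, let $X$ be a random vector in $\mathbb{R}^d$ with $\mathbb{E}\bigl(\lVert X \rVert^2\bigr) < \infty$ and mean $m = \mathbb{E}(X)$, and let $X_1, \dots, X_n$ be $n$ independent copies of $X$. Let $\delta \in (0,1)$ and assume we know $v$ such that \[ \sup_{\theta \in \mathbb{S}_d} \mathbb{E}\bigl( \langle \theta, X - m \rangle^2 \bigr) \leq v < \infty, \] where $\mathbb{S}_d = \{\theta \in \mathbb{R}^d : \lVert \theta \rVert = 1\}$. Let $\mu > 0$ and put \begin{align*} \lambda &= \mu^{-1} \sqrt{\frac{2 \log(\delta^{-1})}{a v n}}, & T &= \max\bigl\{ \mathbb{E}\bigl(\lVert X - m \rVert^2\bigr), v \bigr\},\\ a &= g_2(2\mu) \ \ (\geq 1), & b &= \exp(2\mu)\, g_1\Biggl( \mu^2 \sqrt{\frac{2 a v}{T \log(\delta^{-1})}} \Biggr) \ \ (\geq 1). \end{align*} Define the thresholded sample $Y_i = \frac{\psi(\lambda \lVert X_i \rVert)}{\lambda \lVert X_i \rVert} X_i$, $i = 1, \dots, n$, where $\psi(t) = \min\{t, 1\}$ for $t \geq 0$, and the estimator $\widehat{m} = \frac{1}{n}\sum_{i=1}^n Y_i$. Then with probability at least $1 - \delta$, \[ \lVert \widehat{m} - m \rVert \leq \sqrt{\frac{2 a v \log(\delta^{-1})}{n}} + \sqrt{\frac{b T}{n}} + \inf_{p \geq 1} \frac{C_p}{n^{p/2}} + \inf_{p \geq 2} \frac{C'_p}{n^{p/2}}, \] where the infima are over real $p$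 and \begin{align*} C_p &= \frac{1}{p+1}\biggl( \frac{p}{(p+1)\mu} \biggr)^p \biggl( \frac{2 \log(\delta^{-1})}{a v} \biggr)^{p/2} \sup_{\theta \in \mathbb{S}_d} \mathbb{E}\bigl( \lVert X \rVert^p \langle \theta, X - m \rangle_- \bigr),\\ C'_p &= \frac{1}{p+1}\biggl( \frac{p}{(p+1)\mu} \biggr)^p \biggl( \frac{2 \log(\delta^{-1})}{a v} \biggr)^{p/2} \mathbb{E}\bigl( \lVert X \rVert^p \bigr) \lVert m \rVert \Biggl( 1 + \sqrt{\frac{a \log(\delta^{-1})}{2 v n}}\, \lVert m \rVert \Biggr). \end{align*}
   Context: $\lVert \cdot \rVert$ and $\langle \cdot, \cdot \rangle$ are the Euclidean norm and inner product on $\mathbb{R}^d$. For $r \in \mathbb{R}$, $r_- = \max\{0, -r\}$ is the negative part. The functions $g_1(t) = \frac{1}{t}(\exp(t) - 1)$ and $g_2(t) = \frac{2}{t^2}(\exp(t) - 1 - t)$, $t \in \mathbb{R}$, are increasing and extended by continuity at $t=0$ with $g_1(0) = g_2(0) = 1$. The factor $\frac{\psi(\lambda \lVert x \rVert)}{\lambda \lVert x \rVert}$ is taken to be $1$ when $x = 0$, so that $Y_i$ is the projection of $X_i$ onto the closed ball of radius $1/\lambda$ centred at $0$. *)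

theory Defs
  imports "HOL-Probability.Probability"
begin

definition g1 :: "real \<Rightarrow> real" where
  "g1 t = (if t = 0 then 1 else (exp t - 1) / t)"

definition g2 :: "real \<Rightarrow> real" where
  "g2 t = (if t = 0 then 1 else 2 / t^2 * (exp t - 1 - t))"

definition psi :: "real \<Rightarrow> real" where
  "psi t = min t 1"

definition thresh :: "real \<Rightarrow> 'b::real_normed_vector \<Rightarrow> 'b" where
  "thresh lam x = (if x = 0 then x else (psi (lam * norm x) / (lam * norm x)) *\<^sub>R x)"

definition negpart :: "real \<Rightarrow> real" where
  "negpart r = max 0 (- r)"

end

theory Submission
  imports Defs
begin

text \<open>
  The proof is the PAC-Bayesian argument of Catoni and Giulini. For a direction \<open>y\<close>, the quantity
  \<open>Phi \<omega> y = \<Sum>\<^sub>i lam (y \<bullet> Y\<^sub>i) - n log_mgf_bound y\<close>, where \<open>log_mgf_bound y\<close> bounds the log-Laplace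
  transform of \<open>lam (y \<bullet> Y)\<close>, has exponential moment at most 1 by independence. Averaging over a Gaussian
  perturbation of \<open>y\<close> and applying Markov's inequality once gives an event of probability at least
  \<open>1 - \<delta>\<close> on which, simultaneously for all unit vectors \<open>\<theta>\<close>, a change of measure to the Gaussian
  centred at \<open>\<mu> \<theta>\<close> bounds \<open>\<theta> \<bullet> (mhat - E Y)\<close>. A second-order Taylor bound (the functions \<open>g1\<close>, \<open>g2\<close>)
  turns the averaged exponential moment into variances, and the choice of \<open>lam\<close> and of the
  perturbation scale produces the two square-root terms. Finally the bias \<open>\<theta> \<bullet> (E Y - m)\<close> of the
  thresholding is controlled by the shrinkage factor \<open>1 - psi t / t \<le> psi_const p * t powr p\<close>, which gives the two infima.
\<close>

lemma one_sub_mult_exp_le_one: "(1 - t) * exp t \<le> 1" for t :: real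
proof -
  have "(1 - t) * exp t \<le> exp (- t) * exp t"
    using exp_ge_add_one_self[of "- t"] by (intro mult_right_mono) auto
  then show ?thesis by (simp add: exp_minus_inverse mult.commute)
qed

lemma exp_sub_one_eq_g1: "exp t - 1 = t * g1 t"
  by (simp add: g1_def)

lemma g1_ge_1: "0 \<le> t \<Longrightarrow> 1 \<le> g1 t"
  using exp_ge_add_one_self[of t] by (auto simp: g1_def field_simps)

lemma g1_mono:
  assumes "0 \<le> s" "s \<le> S"
  shows "g1 s \<le> g1 S"
proof (cases "s = 0")
  case True
  then show ?thesis using g1_ge_1[of S] assms by (simp add: g1_def)
next
  case False
  with assms have "0 < s" by simp
  have "(\<lambda>t. (exp t - 1) / t) s \<le> (\<lambda>t. (exp t - 1) / t) S"
  proof (rule DERIV_nonneg_imp_nondecreasing[OF assms(2)])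
    fix x assume "s \<le> x"
    with \<open>0 < s\<close> have "0 < x" by simp
    show "\<exists>y. ((\<lambda>t. (exp t - 1) / t) has_real_derivative y) (at x) \<and> 0 \<le> y"
      using \<open>0 < x\<close> one_sub_mult_exp_le_one[of x]
      by (intro exI[of _ "((x - 1) * exp x + 1) / x\<^sup>2"])
         (auto intro!: derivative_eq_intros simp: field_simps power2_eq_square)
  qed
  with \<open>0 < s\<close> assms show ?thesis by (simp add: g1_def)
qed

lemma exp_sub_one_le_g1:
  assumes "0 \<le> s" "s \<le> S"
  shows "exp s - 1 \<le> s * g1 S"
  unfolding exp_sub_one_eq_g1 using assms g1_mono by (simp add: mult_left_mono)

lemma exp_sub_one_sub_eq_g2: "exp t - 1 - t = t\<^sup>2 / 2 * g2 t"
  by (simp add: g2_def)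

lemma g2_ge_1: "0 \<le> t \<Longrightarrow> 1 \<le> g2 t"
  using exp_lower_Taylor_quadratic[of t] by (auto simp: g2_def field_simps)

lemma exp_sub_one_sub_le_half_sq: "t \<le> 0 \<Longrightarrow> exp t - 1 - t \<le> t\<^sup>2 / 2" for t :: real
proof -
  assume "t \<le> 0"
  have "(\<lambda>t. t\<^sup>2 / 2 - exp t + 1 + t) 0 \<le> (\<lambda>t. t\<^sup>2 / 2 - exp t + 1 + t) t"
  proof (rule DERIV_nonpos_imp_nonincreasing[OF \<open>t \<le> 0\<close>])
    fix x :: real
    show "\<exists>y. ((\<lambda>t. t\<^sup>2 / 2 - exp t + 1 + t) has_real_derivative y) (at x) \<and> y \<le> 0"
      using exp_ge_add_one_self[of x]
      by (intro exI[of _ "x - exp x + 1"]) (auto intro!: derivative_eq_intros simp: algebra_simps)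
  qed
  then show ?thesis by simp
qed

lemma g2_numerator_nonneg: "0 \<le> t \<Longrightarrow> 0 \<le> (t - 2) * exp t + t + 2" for t :: real
proof -
  assume "0 \<le> t"
  have "(\<lambda>t. (t - 2) * exp t + t + 2) 0 \<le> (\<lambda>t. (t - 2) * exp t + t + 2) t"
  proof (rule DERIV_nonneg_imp_nondecreasing[OF \<open>0 \<le> t\<close>])
    fix x :: real
    show "\<exists>y. ((\<lambda>t. (t - 2) * exp t + t + 2) has_real_derivative y) (at x) \<and> 0 \<le> y"
      using one_sub_mult_exp_le_one[of x]
      by (intro exI[of _ "(x - 1) * exp x + 1"]) (auto intro!: derivative_eq_intros simp: algebra_simps)
  qed
  then show ?thesis by simp
qed

lemma g2_mono:
  assumes "0 \<le> s" "s \<le> S"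
  shows "g2 s \<le> g2 S"
proof (cases "s = 0")
  case True
  then show ?thesis using g2_ge_1[of S] assms by (simp add: g2_def)
next
  case False
  with assms have "0 < s" by simp
  have "(\<lambda>t. (exp t - 1 - t) / t\<^sup>2) s \<le> (\<lambda>t. (exp t - 1 - t) / t\<^sup>2) S"
  proof (rule DERIV_nonneg_imp_nondecreasing[OF assms(2)])
    fix x assume "s \<le> x"
    with \<open>0 < s\<close> have "0 < x" by simp
    show "\<exists>y. ((\<lambda>t. (exp t - 1 - t) / t\<^sup>2) has_real_derivative y) (at x) \<and> 0 \<le> y"
      using \<open>0 < x\<close> g2_numerator_nonneg[of x]
      by (intro exI[of _ "((x - 2) * exp x + x + 2) / x ^ 3"])
         (auto intro!: derivative_eq_intros simp: field_simps power2_eq_square power3_eq_cube)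
  qed
  with \<open>0 < s\<close> assms show ?thesis by (simp add: g2_def field_simps)
qed

lemma exp_sub_one_sub_le_g2:
  assumes "t \<le> S" "0 \<le> S"
  shows "exp t - 1 - t \<le> t\<^sup>2 / 2 * g2 S"
proof (cases "t \<le> 0")
  case True
  then have "exp t - 1 - t \<le> t\<^sup>2 / 2" by (rule exp_sub_one_sub_le_half_sq)
  also have "\<dots> \<le> t\<^sup>2 / 2 * g2 S"
    using g2_ge_1[OF assms(2)] by (simp add: mult_le_cancel_left1)
  finally show ?thesis .
next
  case False
  then show ?thesis
    unfolding exp_sub_one_sub_eq_g2 using assms g2_mono[of t S] by (simp add: mult_left_mono)
qed

lemma exp_add_sub_one_le:
  assumes "t \<le> T" "0 \<le> T" "0 \<le> s" "s \<le> S"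
  shows "exp (t + s) - 1 - t \<le> t\<^sup>2 / 2 * g2 T + exp T * (s * g1 S)"
proof -
  have "exp t * (exp s - 1) \<le> exp T * (s * g1 S)"
    using assms exp_sub_one_le_g1[of s S] by (intro mult_mono) auto
  moreover have "exp (t + s) - 1 - t = (exp t - 1 - t) + exp t * (exp s - 1)"
    by (simp add: exp_add algebra_simps)
  ultimately show ?thesis
    using exp_sub_one_sub_le_g2[OF assms(1,2)] by linarith
qed

lemma convex_comb_sq_le:
  fixes a x y :: real
  assumes "0 \<le> a" "a \<le> 1"
  shows "((1 - a) * x + a * y)\<^sup>2 \<le> x\<^sup>2 + a * y\<^sup>2"
proof -
  have "((1 - a) * x + a * y)\<^sup>2 = (1 - a) * x\<^sup>2 + a * y\<^sup>2 - a * (1 - a) * (x - y)\<^sup>2"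
    by (simp add: power2_eq_square algebra_simps)
  moreover have "0 \<le> a * x\<^sup>2 + a * (1 - a) * (x - y)\<^sup>2"
    using assms by simp
  ultimately show ?thesis by (simp add: algebra_simps)
qed

lemma Bernoulli_inequality_powr:
  fixes y q :: real
  assumes "0 < y" "1 \<le> q"
  shows "1 + q * (y - 1) \<le> y powr q"
proof -
  have "(y powr q) powr (1 / q) * 1 powr (1 - 1 / q) \<le> (1 / q) * y powr q + (1 - 1 / q) * 1"
    using assms by (intro Youngs_inequality_0) auto
  then have "y \<le> (1 / q) * y powr q + (1 - 1 / q)"
    using assms by (simp add: powr_powr)
  then have "q * (1 + q * (y - 1)) \<le> q * y powr q"
    using assms by (simp add: field_simps)
  then show ?thesis using assms by simp
qed

definition psi_const :: "real \<Rightarrow> real" where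
  "psi_const p = 1 / (p + 1) * (p / (p + 1)) powr p"

lemma psi_const_nonneg: "0 < p \<Longrightarrow> 0 \<le> psi_const p"
  by (simp add: psi_const_def)

lemma one_sub_psi_div_le:
  fixes p t :: real
  assumes "0 < p" "0 < t"
  shows "1 - psi t / t \<le> psi_const p * t powr p"
proof (cases "t \<le> 1")
  case True
  then show ?thesis using assms by (simp add: psi_def psi_const_def)
next
  case False
  \<comment> \<open>Bernoulli at the point where the bound is tight, \<open>y = t p / (p + 1)\<close>.\<close>
  define y where "y = p / (p + 1) * t"
  have "p * (t - 1) = 1 + (p + 1) * (y - 1)"
    using assms by (simp add: y_def field_simps)
  also have "\<dots> \<le> y powr (p + 1)"
    using assms by (intro Bernoulli_inequality_powr) (auto simp: y_def)
  also have "\<dots> = (p / (p + 1)) powr (p + 1) * t powr (p + 1)"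
    unfolding y_def using assms by (intro powr_mult)
  also have "\<dots> = p * (psi_const p * t powr p * t)"
    using assms by (simp add: powr_add psi_const_def field_simps)
  finally have "p * (t - 1) \<le> p * (psi_const p * t powr p * t)" .
  then have "t - 1 \<le> psi_const p * t powr p * t"
    using assms by simp
  then show ?thesis using False assms by (simp add: psi_def field_simps)
qed

section \<open>Isotropic Gaussian measures\<close>

definition gauss_weight :: "real \<Rightarrow> 'd::euclidean_space \<Rightarrow> real" where
  "gauss_weight \<beta> x = exp (- \<beta> * (norm x)\<^sup>2 / 2)"

lemma gauss_weight_pos: "0 < gauss_weight \<beta> x"
  by (simp add: gauss_weight_def)

lemma gauss_weight_uminus [simp]: "gauss_weight \<beta> (- x) = gauss_weight \<beta> x"
  by (simp add: gauss_weight_def)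

lemma borel_measurable_gauss_weight [measurable]: "gauss_weight \<beta> \<in> borel_measurable borel"
  unfolding gauss_weight_def[abs_def] by measurable

lemma gauss_weight_add:
  "gauss_weight \<beta> (c + x) = gauss_weight \<beta> x * exp (- \<beta> * (c \<bullet> x) - \<beta> * (norm c)\<^sup>2 / 2)"
proof -
  have "(norm (c + x))\<^sup>2 = (norm c)\<^sup>2 + 2 * (c \<bullet> x) + (norm x)\<^sup>2"
    by (simp add: power2_norm_eq_inner inner_simps inner_commute)
  then show ?thesis unfolding gauss_weight_def by (simp add: exp_add[symmetric] field_simps)
qed

lemma nn_integral_exp_neg_sq:
  assumes "0 < \<beta>"
  shows "(\<integral>\<^sup>+ t. ennreal (exp (- \<beta> * t\<^sup>2 / 2)) \<partial>lborel) = ennreal (sqrt (2 * pi / \<beta>))"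
proof -
  have "exp (- \<beta> * t\<^sup>2 / 2) = sqrt (2 * pi / \<beta>) * normal_density 0 (1 / sqrt \<beta>) t" for t
    using assms by (simp add: normal_density_def real_sqrt_divide power_divide field_simps)
  then have "(\<integral>\<^sup>+ t. ennreal (exp (- \<beta> * t\<^sup>2 / 2)) \<partial>lborel)
      = (\<integral>\<^sup>+ t. ennreal (sqrt (2 * pi / \<beta>)) * ennreal (normal_density 0 (1 / sqrt \<beta>) t) \<partial>lborel)"
    using assms by (simp add: ennreal_mult')
  also have "\<dots> = ennreal (sqrt (2 * pi / \<beta>))"
    using assms by (simp add: nn_integral_cmult nn_integral_eq_integral)
  finally show ?thesis .
qed

lemma nn_integral_gauss_weight:
  assumes "0 < \<beta>"
  shows "(\<integral>\<^sup>+ x. ennreal (gauss_weight \<beta> x) \<partial>(lborel :: 'd::euclidean_space measure))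
         = ennreal (sqrt (2 * pi / \<beta>) ^ DIM('d))"
proof -
  interpret product_sigma_finite "\<lambda>_ :: 'd. lborel :: real measure"
    by unfold_locales
  have weight_prod: "ennreal (gauss_weight \<beta> (\<Sum>b\<in>Basis. g b *\<^sub>R b :: 'd))
      = (\<Prod>b\<in>(Basis :: 'd set). ennreal (exp (- \<beta> * (g b)\<^sup>2 / 2)))" for g
  proof -
    have "(norm (\<Sum>b\<in>Basis. g b *\<^sub>R b :: 'd))\<^sup>2 = (\<Sum>b\<in>(Basis :: 'd set). (g b)\<^sup>2)"
      unfolding power2_norm_eq_inner by (subst euclidean_inner) (simp add: power2_eq_square)
    then show ?thesis
      by (simp add: gauss_weight_def sum_distrib_left sum_divide_distrib exp_sum prod_ennreal)
  qed
  have "(\<integral>\<^sup>+ x. ennreal (gauss_weight \<beta> x) \<partial>(lborel :: 'd measure))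
      = (\<integral>\<^sup>+ g. ennreal (gauss_weight \<beta> (\<Sum>b\<in>Basis. g b *\<^sub>R b :: 'd)) \<partial>(\<Pi>\<^sub>M b\<in>Basis. lborel))"
    by (subst lborel_eq) (simp add: nn_integral_distr)
  also have "\<dots> = (\<Prod>b\<in>(Basis :: 'd set). \<integral>\<^sup>+ t. ennreal (exp (- \<beta> * t\<^sup>2 / 2)) \<partial>lborel)"
    unfolding weight_prod by (rule product_nn_integral_prod) auto
  also have "\<dots> = ennreal (sqrt (2 * pi / \<beta>) ^ DIM('d))"
    unfolding nn_integral_exp_neg_sq[OF assms] using assms by (simp add: ennreal_power)
  finally show ?thesis .
qed

definition gaussian :: "real \<Rightarrow> 'd::euclidean_space measure" where
  "gaussian \<beta> = density lborel (\<lambda>x. ennreal (gauss_weight \<beta> x / sqrt (2 * pi / \<beta>) ^ DIM('d)))"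

lemma sets_gaussian [simp, measurable_cong]: "sets (gaussian \<beta>) = sets borel"
  by (simp add: gaussian_def)

lemma space_gaussian [simp]: "space (gaussian \<beta>) = UNIV"
  by (simp add: gaussian_def)

lemma nn_integral_gaussian:
  assumes "f \<in> borel_measurable borel"
  shows "(\<integral>\<^sup>+ x. f x \<partial>gaussian \<beta>)
       = (\<integral>\<^sup>+ x. ennreal (gauss_weight \<beta> x / sqrt (2 * pi / \<beta>) ^ DIM('d)) * f x
            \<partial>(lborel :: 'd::euclidean_space measure))"
  unfolding gaussian_def using assms by (simp add: nn_integral_density)

lemma prob_space_gaussian:
  assumes "0 < \<beta>"
  shows "prob_space (gaussian \<beta> :: 'd::euclidean_space measure)"
proof
  define K where "K = sqrt (2 * pi / \<beta>) ^ DIM('d)"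
  have "0 < K" using assms by (simp add: K_def)
  have "emeasure (gaussian \<beta>) (space (gaussian \<beta>) :: 'd set) = (\<integral>\<^sup>+ x. 1 \<partial>(gaussian \<beta> :: 'd measure))"
    by simp
  also have "\<dots> = (\<integral>\<^sup>+ x. ennreal (1 / K) * ennreal (gauss_weight \<beta> x) \<partial>(lborel :: 'd measure))"
    using \<open>0 < K\<close> unfolding K_def
    by (subst nn_integral_gaussian) (auto intro!: nn_integral_cong simp: ennreal_mult'[symmetric] gauss_weight_pos less_imp_le)
  also have "\<dots> = ennreal (1 / K) * ennreal K"
    using assms by (simp add: nn_integral_cmult nn_integral_gauss_weight K_def)
  also have "\<dots> = 1"
    using \<open>0 < K\<close> by (simp flip: ennreal_mult)
  finally show "emeasure (gaussian \<beta>) (space (gaussian \<beta>) :: 'd set) = 1" .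
qed

lemma nn_integral_gaussian_shift:
  assumes "f \<in> borel_measurable borel" "0 < \<beta>"
  shows "(\<integral>\<^sup>+ x. f x \<partial>gaussian \<beta>)
       = (\<integral>\<^sup>+ x. f (c + x) * ennreal (exp (- \<beta> * (c \<bullet> x) - \<beta> * (norm c)\<^sup>2 / 2))
            \<partial>(gaussian \<beta> :: 'd::euclidean_space measure))"
proof -
  define K where "K = sqrt (2 * pi / \<beta>) ^ DIM('d)"
  have "0 < K" using assms by (simp add: K_def)
  have "(\<integral>\<^sup>+ x. f x \<partial>gaussian \<beta>)
      = (\<integral>\<^sup>+ x. ennreal (gauss_weight \<beta> x / K) * f x \<partial>(lborel :: 'd measure))"
    unfolding K_def using assms(1) by (rule nn_integral_gaussian)
  also have "\<dots> = (\<integral>\<^sup>+ x. ennreal (gauss_weight \<beta> (c + x) / K) * f (c + x) \<partial>(lborel :: 'd measure))"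
    using assms by (subst lborel_distr_plus[of c, symmetric]) (simp add: nn_integral_distr)
  also have "\<dots> = (\<integral>\<^sup>+ x. ennreal (gauss_weight \<beta> x / K)
                    * (f (c + x) * ennreal (exp (- \<beta> * (c \<bullet> x) - \<beta> * (norm c)\<^sup>2 / 2))) \<partial>(lborel :: 'd measure))"
    using \<open>0 < K\<close> by (intro nn_integral_cong)
      (simp add: gauss_weight_add ennreal_mult'[symmetric] ennreal_mult mult_ac gauss_weight_pos less_imp_le)
  also have "\<dots> = (\<integral>\<^sup>+ x. f (c + x) * ennreal (exp (- \<beta> * (c \<bullet> x) - \<beta> * (norm c)\<^sup>2 / 2)) \<partial>gaussian \<beta>)"
    unfolding K_def using assms by (subst nn_integral_gaussian) auto
  finally show ?thesis .
qed

lemma nn_integral_gaussian_exp_inner: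
  assumes "0 < \<beta>"
  shows "(\<integral>\<^sup>+ x. ennreal (exp (z \<bullet> x)) \<partial>(gaussian \<beta> :: 'd::euclidean_space measure))
       = ennreal (exp ((norm z)\<^sup>2 / (2 * \<beta>)))"
proof -
  interpret prob_space "gaussian \<beta> :: 'd measure" by (rule prob_space_gaussian[OF assms])
  define c where "c = (1 / \<beta>) *\<^sub>R z"
  have "z \<bullet> (c + x) + (- \<beta> * (c \<bullet> x) - \<beta> * (norm c)\<^sup>2 / 2) = (norm z)\<^sup>2 / (2 * \<beta>)" for x
    using assms by (simp add: c_def inner_simps power2_eq_square norm_eq_sqrt_inner field_simps)
  then have "(\<integral>\<^sup>+ x. ennreal (exp (z \<bullet> x)) \<partial>(gaussian \<beta> :: 'd measure))
      = (\<integral>\<^sup>+ x. ennreal (exp ((norm z)\<^sup>2 / (2 * \<beta>))) \<partial>(gaussian \<beta> :: 'd measure))"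
    using assms by (subst nn_integral_gaussian_shift[where c = c])
      (simp_all add: ennreal_mult'[symmetric] exp_add[symmetric])
  then show ?thesis using emeasure_space_1 by simp
qed

lemma nn_integral_gaussian_uminus:
  assumes "f \<in> borel_measurable borel"
  shows "(\<integral>\<^sup>+ x. f (- x) \<partial>gaussian \<beta>) = (\<integral>\<^sup>+ x. f x \<partial>(gaussian \<beta> :: 'd::euclidean_space measure))"
proof -
  have reflect: "distr lborel borel uminus = (lborel :: 'd measure)"
    using lborel_affine[of "- 1 :: real" "0 :: 'd"] by (simp add: density_1)
  have "(\<integral>\<^sup>+ x. f (- x) \<partial>gaussian \<beta>)
      = (\<integral>\<^sup>+ x. ennreal (gauss_weight \<beta> (- x) / sqrt (2 * pi / \<beta>) ^ DIM('d)) * f (- x) \<partial>(lborel :: 'd measure))"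
    using assms by (simp add: nn_integral_gaussian)
  also have "\<dots> = (\<integral>\<^sup>+ x. ennreal (gauss_weight \<beta> x / sqrt (2 * pi / \<beta>) ^ DIM('d)) * f x \<partial>(lborel :: 'd measure))"
    using assms by (subst (2) reflect[symmetric]) (simp add: nn_integral_distr)
  also have "\<dots> = (\<integral>\<^sup>+ x. f x \<partial>gaussian \<beta>)"
    using assms by (simp add: nn_integral_gaussian)
  finally show ?thesis .
qed

lemma integrable_gaussian_inner:
  assumes "0 < \<beta>"
  shows "integrable (gaussian \<beta> :: 'd::euclidean_space measure) (\<lambda>x. w \<bullet> x)"
proof (rule integrableI_bounded)
  have "\<bar>t\<bar> \<le> exp t + exp (- t)" for t :: real
    using exp_ge_add_one_self[of t] exp_ge_add_one_self[of "- t"] exp_gt_zero[of t] exp_gt_zero[of "- t"]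
    unfolding abs_le_iff by linarith
  then have "\<bar>w \<bullet> x\<bar> \<le> exp (w \<bullet> x) + exp ((- w) \<bullet> x)" for x :: 'd
    by simp
  then have "(\<integral>\<^sup>+ x. ennreal (norm (w \<bullet> x)) \<partial>(gaussian \<beta> :: 'd measure))
      \<le> (\<integral>\<^sup>+ x. ennreal (exp (w \<bullet> x)) + ennreal (exp ((- w) \<bullet> x)) \<partial>gaussian \<beta>)"
    by (intro nn_integral_mono) (simp flip: ennreal_plus)
  also have "\<dots> < \<infinity>"
    using assms by (simp add: nn_integral_add nn_integral_gaussian_exp_inner del: inner_minus_left)
  finally show "(\<integral>\<^sup>+ x. ennreal (norm (w \<bullet> x)) \<partial>(gaussian \<beta> :: 'd measure)) < \<infinity>" .
qed simp

lemma integral_gaussian_inner: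
  assumes "0 < \<beta>"
  shows "(\<integral>x. w \<bullet> x \<partial>(gaussian \<beta> :: 'd::euclidean_space measure)) = 0"
proof -
  have "(\<integral>\<^sup>+ x. ennreal (w \<bullet> x) \<partial>(gaussian \<beta> :: 'd measure)) = (\<integral>\<^sup>+ x. ennreal (- (w \<bullet> x)) \<partial>gaussian \<beta>)"
    using nn_integral_gaussian_uminus[of "\<lambda>x. ennreal (w \<bullet> x)" \<beta>] by simp
  then show ?thesis
    by (simp add: real_lebesgue_integral_def[OF integrable_gaussian_inner[OF assms]])
qed

lemma exp_integral_le_nn_integral_exp:
  assumes "prob_space N" "integrable N G"
  shows "ennreal (exp (\<integral>x. G x \<partial>N)) \<le> (\<integral>\<^sup>+ x. ennreal (exp (G x)) \<partial>N)"
proof (cases "(\<integral>\<^sup>+ x. ennreal (exp (G x)) \<partial>N) = \<infinity>")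
  case False
  interpret prob_space N by fact
  have int_exp: "integrable N (\<lambda>x. exp (G x))"
    using False assms(2) by (intro integrableI_nonneg) (auto simp: top.not_eq_extremum)
  have "exp (\<integral>x. G x \<partial>N) \<le> (\<integral>x. exp (G x) \<partial>N)"
    using assms(2) int_exp exp_convex by (intro jensens_inequality[where I = UNIV]) auto
  then show ?thesis
    by (simp add: nn_integral_eq_integral[OF int_exp])
qed simp

text \<open>Jensen's inequality after moving \<open>gaussian \<beta>\<close> to its translate by \<open>c\<close>:
  the translation costs the relative entropy \<open>\<beta> \<parallel>c\<parallel>\<^sup>2 / 2\<close>.\<close>

lemma exp_integral_shift_le_nn_integral_gaussian:
  fixes F :: "'d::euclidean_space \<Rightarrow> real"
  assumes "0 < \<beta>" "F \<in> borel_measurable borel"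
    and "integrable (gaussian \<beta>) (\<lambda>x. F (c + x) - \<beta> * (c \<bullet> x) - \<beta> * (norm c)\<^sup>2 / 2)"
  shows "ennreal (exp (\<integral>x. F (c + x) - \<beta> * (c \<bullet> x) - \<beta> * (norm c)\<^sup>2 / 2 \<partial>(gaussian \<beta> :: 'd measure)))
         \<le> (\<integral>\<^sup>+ x. ennreal (exp (F x)) \<partial>gaussian \<beta>)"
proof -
  have "(\<integral>\<^sup>+ x. ennreal (exp (F x)) \<partial>(gaussian \<beta> :: 'd measure))
      = (\<integral>\<^sup>+ x. ennreal (exp (F (c + x) - \<beta> * (c \<bullet> x) - \<beta> * (norm c)\<^sup>2 / 2)) \<partial>gaussian \<beta>)"
    using assms by (subst nn_integral_gaussian_shift[where c = c])
      (simp_all add: ennreal_mult'[symmetric] exp_add[symmetric] algebra_simps)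
  then show ?thesis
    using exp_integral_le_nn_integral_exp[OF prob_space_gaussian[OF assms(1)] assms(3)] by simp
qed

section \<open>Thresholding\<close>

definition shrinkage :: "real \<Rightarrow> 'b::real_normed_vector \<Rightarrow> real" where
  "shrinkage lam x = (if x = 0 then 0 else 1 - psi (lam * norm x) / (lam * norm x))"

lemma thresh_eq_shrinkage: "thresh lam x = (1 - shrinkage lam x) *\<^sub>R x"
  by (simp add: thresh_def shrinkage_def)

lemma shrinkage_nonneg: "0 < lam \<Longrightarrow> 0 \<le> shrinkage lam x"
  by (auto simp: shrinkage_def psi_def min_def field_simps)

lemma shrinkage_le_1: "0 < lam \<Longrightarrow> shrinkage lam x \<le> 1"
  by (auto simp: shrinkage_def psi_def min_def field_simps)

lemma shrinkage_le_powr: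
  assumes "0 < p" "0 < lam"
  shows "shrinkage lam x \<le> psi_const p * lam powr p * norm x powr p"
proof (cases "x = 0")
  case False
  then have "shrinkage lam x \<le> psi_const p * (lam * norm x) powr p"
    using assms one_sub_psi_div_le[of p "lam * norm x"] by (simp add: shrinkage_def)
  then show ?thesis
    using assms by (simp add: powr_mult mult.assoc)
qed (use assms in \<open>simp add: shrinkage_def psi_const_def\<close>)

lemma borel_measurable_thresh [measurable]:
  "thresh lam \<in> (borel_measurable borel :: ('b::euclidean_space \<Rightarrow> 'b) set)"
  unfolding thresh_def[abs_def] psi_def by measurable

lemma borel_measurable_shrinkage [measurable]:
  "shrinkage lam \<in> (borel_measurable borel :: ('b::euclidean_space \<Rightarrow> real) set)"
  unfolding shrinkage_def[abs_def] psi_def by measurable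

lemma thresh_eq_closest_point:
  fixes x :: "'b::euclidean_space"
  assumes "0 < lam"
  shows "thresh lam x = closest_point (cball 0 (1 / lam)) x"
proof (cases "norm x \<le> 1 / lam")
  case True
  then show ?thesis
    using assms by (auto simp: thresh_def psi_def min_def field_simps closest_point_self)
next
  case False
  with assms have "0 < norm x" by (smt (verit) divide_pos_pos)
  have thresh_x: "thresh lam x = (1 / (lam * norm x)) *\<^sub>R x"
    using assms False by (auto simp: thresh_def psi_def min_def field_simps)
  show ?thesis
  proof (rule closest_point_unique)
    show "thresh lam x \<in> cball 0 (1 / lam)"
      using assms \<open>0 < norm x\<close> by (simp add: thresh_x)
    show "\<forall>z\<in>cball 0 (1 / lam). dist x (thresh lam x) \<le> dist x z"
    proof
      fix z :: 'b assume "z \<in> cball 0 (1 / lam)"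
      have "dist x (thresh lam x) = norm ((1 - 1 / (lam * norm x)) *\<^sub>R x)"
        by (simp add: thresh_x dist_norm algebra_simps)
      also have "\<dots> = norm x - 1 / lam"
        using assms \<open>0 < norm x\<close> False by (simp add: field_simps abs_if)
      also have "\<dots> \<le> norm x - norm z"
        using \<open>z \<in> cball 0 (1 / lam)\<close> by simp
      also have "\<dots> \<le> dist x z"
        by (simp add: dist_norm norm_triangle_ineq2)
      finally show "dist x (thresh lam x) \<le> dist x z" .
    qed
  qed auto
qed

lemma norm_thresh_le: "0 < lam \<Longrightarrow> norm (thresh lam x) \<le> 1 / lam"
  for x :: "'b::euclidean_space"
  using closest_point_in_set[of "cball (0 :: 'b) (1 / lam)" x] by (simp add: thresh_eq_closest_point)

lemma thresh_lipschitz: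
  fixes x y :: "'b::euclidean_space"
  assumes "0 < lam"
  shows "norm (thresh lam x - thresh lam y) \<le> norm (x - y)"
  using closest_point_lipschitz[of "cball (0 :: 'b) (1 / lam)" x y] assms
  by (simp add: thresh_eq_closest_point dist_norm)

section \<open>Exponential moments of the thresholded sample\<close>

locale thresholded_sample = prob_space M for M :: "'a measure" +
  fixes X :: "'a \<Rightarrow> 'd::euclidean_space" and Xs :: "nat \<Rightarrow> 'a \<Rightarrow> 'd" and n :: nat and lam :: real
  assumes X_meas [measurable]: "X \<in> borel_measurable M"
    and n_pos: "n \<ge> 1"
    and Xs_meas [measurable]: "\<And>i. i < n \<Longrightarrow> Xs i \<in> borel_measurable M"
    and Xs_distr: "\<And>i. i < n \<Longrightarrow> distr M borel (Xs i) = distr M borel X"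
    and Xs_indep: "indep_vars (\<lambda>_. borel) Xs {..<n}"
    and lam_pos: "0 < lam"
begin

definition "Y \<omega> = thresh lam (X \<omega>)"
definition "EY = (\<integral>\<omega>. Y \<omega> \<partial>M)"
definition "Z \<omega> = Y \<omega> - EY"

definition "mgf_Z y = (\<integral>\<omega>. exp (lam * (y \<bullet> Z \<omega>)) \<partial>M)"

text \<open>\<open>log_mgf_bound\<close> replaces the log-Laplace transform of \<open>lam * (y \<bullet> Y)\<close> by its upper bound
  from \<open>ln r \<le> r - 1\<close>; being linear in \<open>mgf_Z\<close>, it can be averaged over Gaussian perturbations of \<open>y\<close>.\<close>

definition "log_mgf_bound y = lam * (y \<bullet> EY) + mgf_Z y - 1"
definition "Phi \<omega> y = (\<Sum>i<n. lam * (y \<bullet> thresh lam (Xs i \<omega>))) - real n * log_mgf_bound y"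

lemma Y_meas [measurable]: "Y \<in> borel_measurable M"
  unfolding Y_def[abs_def] by measurable

lemma norm_Y_le: "norm (Y \<omega>) \<le> 1 / lam"
  unfolding Y_def using norm_thresh_le[OF lam_pos] .

lemma integrable_Y: "integrable M Y"
  by (rule integrable_const_bound[where B = "1 / lam"]) (auto simp: norm_Y_le)

lemma norm_EY_le: "norm EY \<le> 1 / lam"
proof -
  have "norm EY \<le> (\<integral>\<omega>. norm (Y \<omega>) \<partial>M)"
    unfolding EY_def by (rule integral_norm_bound)
  also have "\<dots> \<le> (\<integral>\<omega>. 1 / lam \<partial>M)"
    by (rule integral_mono) (auto simp: norm_Y_le integrable_Y)
  finally show ?thesis by (simp add: prob_space)
qed

lemma Z_meas [measurable]: "Z \<in> borel_measurable M"
  unfolding Z_def[abs_def] by measurable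

lemma norm_Z_le: "norm (Z \<omega>) \<le> 2 / lam"
  using norm_triangle_ineq4[of "Y \<omega>" EY] norm_Y_le[of \<omega>] norm_EY_le by (simp add: Z_def)

lemma integrable_Z: "integrable M Z"
  by (rule integrable_const_bound[where B = "2 / lam"]) (auto simp: norm_Z_le)

lemma integral_Z: "(\<integral>\<omega>. Z \<omega> \<partial>M) = 0"
  using integrable_Y by (simp add: Z_def EY_def prob_space)

lemma lam_inner_Z_le: "lam * (y \<bullet> Z \<omega>) \<le> 2 * norm y"
proof -
  have "lam * (y \<bullet> Z \<omega>) \<le> lam * (norm y * norm (Z \<omega>))"
    using lam_pos by (intro mult_left_mono norm_cauchy_schwarz) auto
  also have "\<dots> \<le> lam * (norm y * (2 / lam))"
    using lam_pos norm_Z_le[of \<omega>] by (intro mult_left_mono) auto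
  finally show ?thesis using lam_pos by simp
qed

lemma lam_sq_norm_Z_sq_le: "lam\<^sup>2 * (norm (Z \<omega>))\<^sup>2 \<le> 4"
proof -
  have "lam\<^sup>2 * (norm (Z \<omega>))\<^sup>2 \<le> lam\<^sup>2 * (2 / lam)\<^sup>2"
    using norm_Z_le[of \<omega>] by (intro mult_left_mono power_mono) auto
  then show ?thesis
    using lam_pos by (simp add: power2_eq_square)
qed

lemma integrable_exp_inner_Z: "integrable M (\<lambda>\<omega>. exp (lam * (y \<bullet> Z \<omega>)))"
  by (rule integrable_const_bound[where B = "exp (2 * norm y)"]) (auto simp: lam_inner_Z_le)

lemma nn_integral_exp_inner_Z: "(\<integral>\<^sup>+ \<omega>. ennreal (exp (lam * (y \<bullet> Z \<omega>))) \<partial>M) = ennreal (mgf_Z y)"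
  unfolding mgf_Z_def by (simp add: nn_integral_eq_integral[OF integrable_exp_inner_Z])

lemma mgf_Z_nonneg: "0 \<le> mgf_Z y"
  unfolding mgf_Z_def by simp

lemma mgf_Z_meas [measurable]: "mgf_Z \<in> borel_measurable borel"
  unfolding mgf_Z_def[abs_def] by measurable

lemma log_mgf_bound_meas [measurable]: "log_mgf_bound \<in> borel_measurable borel"
  unfolding log_mgf_bound_def[abs_def] by measurable

lemma integral_exp_inner_Y_le: "(\<integral>\<omega>. exp (lam * (y \<bullet> Y \<omega>)) \<partial>M) \<le> exp (log_mgf_bound y)"
proof -
  have "(\<integral>\<omega>. exp (lam * (y \<bullet> Y \<omega>)) \<partial>M) = (\<integral>\<omega>. exp (lam * (y \<bullet> EY)) * exp (lam * (y \<bullet> Z \<omega>)) \<partial>M)"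
    by (simp add: Z_def inner_diff_right algebra_simps exp_add[symmetric])
  also have "\<dots> = exp (lam * (y \<bullet> EY)) * mgf_Z y"
    by (simp add: mgf_Z_def)
  also have "\<dots> \<le> exp (lam * (y \<bullet> EY)) * exp (mgf_Z y - 1)"
    using exp_ge_add_one_self[of "mgf_Z y - 1"] by (intro mult_left_mono) auto
  also have "\<dots> = exp (log_mgf_bound y)"
    by (simp add: log_mgf_bound_def exp_add[symmetric])
  finally show ?thesis .
qed

lemma nn_integral_exp_Phi_le_1: "(\<integral>\<^sup>+ \<omega>. ennreal (exp (Phi \<omega> y)) \<partial>M) \<le> 1"
proof -
  let ?e = "\<lambda>z. ennreal (exp (lam * (y \<bullet> thresh lam z)))"
  have indep: "indep_vars (\<lambda>_. borel) (\<lambda>i \<omega>. ?e (Xs i \<omega>)) {..<n}"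
    by (intro indep_vars_compose2[OF Xs_indep]) auto
  have identical: "(\<integral>\<^sup>+ \<omega>. ?e (Xs i \<omega>) \<partial>M) = (\<integral>\<^sup>+ \<omega>. ?e (X \<omega>) \<partial>M)" if "i < n" for i
  proof -
    have "(\<integral>\<^sup>+ \<omega>. ?e (Xs i \<omega>) \<partial>M) = (\<integral>\<^sup>+ z. ?e z \<partial>distr M borel (Xs i))"
      using that by (simp add: nn_integral_distr)
    also have "\<dots> = (\<integral>\<^sup>+ \<omega>. ?e (X \<omega>) \<partial>M)"
      using that by (simp add: Xs_distr nn_integral_distr)
    finally show ?thesis .
  qed
  have integrable_exp_Y: "integrable M (\<lambda>\<omega>. exp (lam * (y \<bullet> Y \<omega>)))"
  proof (rule integrable_const_bound[where B = "exp (norm y)"])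
    have "y \<bullet> Y \<omega> \<le> norm y * (1 / lam)" for \<omega>
      using norm_cauchy_schwarz[of y "Y \<omega>"] mult_left_mono[OF norm_Y_le[of \<omega>], of "norm y"] by simp
    then have "lam * (y \<bullet> Y \<omega>) \<le> norm y" for \<omega>
      using lam_pos by (simp add: field_simps)
    then show "AE \<omega> in M. norm (exp (lam * (y \<bullet> Y \<omega>))) \<le> exp (norm y)"
      using lam_pos by simp
  qed simp
  have "(\<integral>\<^sup>+ \<omega>. ennreal (exp (Phi \<omega> y)) \<partial>M)
      = (\<integral>\<^sup>+ \<omega>. ennreal (exp (- real n * log_mgf_bound y)) * (\<Prod>i<n. ?e (Xs i \<omega>)) \<partial>M)"
    by (intro nn_integral_cong)
      (simp add: Phi_def exp_diff exp_sum prod_ennreal ennreal_mult'[symmetric] exp_minus field_simps divide_ennreal)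
  also have "\<dots> = ennreal (exp (- real n * log_mgf_bound y)) * (\<Prod>i<n. \<integral>\<^sup>+ \<omega>. ?e (X \<omega>) \<partial>M)"
    by (simp add: nn_integral_cmult indep_vars_nn_integral[OF _ indep] identical)
  also have "\<dots> = ennreal (exp (- real n * log_mgf_bound y)) * ennreal ((\<integral>\<omega>. exp (lam * (y \<bullet> Y \<omega>)) \<partial>M) ^ n)"
    by (simp add: Y_def[symmetric] nn_integral_eq_integral[OF integrable_exp_Y] ennreal_power)
  also have "\<dots> \<le> ennreal (exp (- real n * log_mgf_bound y)) * ennreal (exp (log_mgf_bound y) ^ n)"
    by (intro mult_left_mono ennreal_leI power_mono integral_exp_inner_Y_le) auto
  also have "\<dots> = 1"
    by (simp add: ennreal_mult'[symmetric] exp_of_nat_mult[symmetric] exp_add[symmetric])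
  finally show ?thesis .
qed

end

section \<open>PAC-Bayesian bound with Gaussian perturbations\<close>

context thresholded_sample
begin

definition "gibbs_mass \<beta> \<omega> = (\<integral>\<^sup>+ x. ennreal (exp (Phi \<omega> x)) \<partial>(gaussian \<beta> :: 'd measure))"

definition "good_event \<beta> \<delta> = {\<omega> \<in> space M. ennreal \<delta> * gibbs_mass \<beta> \<omega> < 1}"

lemma Phi_meas [measurable]: "(\<lambda>(\<omega>, x). Phi \<omega> x) \<in> borel_measurable (M \<Otimes>\<^sub>M (gaussian \<beta> :: 'd measure))"
  unfolding Phi_def by measurable

lemma Phi_section_meas [measurable]: "Phi \<omega> \<in> borel_measurable borel"
  unfolding Phi_def[abs_def] by measurable

lemma gibbs_mass_meas [measurable]:
  assumes "0 < \<beta>"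
  shows "gibbs_mass \<beta> \<in> borel_measurable M"
proof -
  interpret G: prob_space "gaussian \<beta> :: 'd measure" by (rule prob_space_gaussian[OF assms])
  show ?thesis unfolding gibbs_mass_def[abs_def] by measurable
qed

lemma nn_integral_gibbs_mass_le_1:
  assumes "0 < \<beta>"
  shows "(\<integral>\<^sup>+ \<omega>. gibbs_mass \<beta> \<omega> \<partial>M) \<le> 1"
proof -
  interpret G: prob_space "gaussian \<beta> :: 'd measure" by (rule prob_space_gaussian[OF assms])
  interpret pair_sigma_finite M "gaussian \<beta> :: 'd measure" by unfold_locales
  have "(\<integral>\<^sup>+ \<omega>. gibbs_mass \<beta> \<omega> \<partial>M) = (\<integral>\<^sup>+ x. (\<integral>\<^sup>+ \<omega>. ennreal (exp (Phi \<omega> x)) \<partial>M) \<partial>(gaussian \<beta> :: 'd measure))"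
    unfolding gibbs_mass_def by (rule Fubini'[symmetric]) measurable
  also have "\<dots> \<le> (\<integral>\<^sup>+ x. 1 \<partial>(gaussian \<beta> :: 'd measure))"
    by (intro nn_integral_mono nn_integral_exp_Phi_le_1)
  finally show ?thesis using G.emeasure_space_1 by simp
qed

lemma prob_good_event:
  assumes "0 < \<beta>" "0 < \<delta>"
  shows "1 - \<delta> \<le> prob (good_event \<beta> \<delta>)"
proof -
  define bad where "bad = {\<omega> \<in> space M. 1 \<le> ennreal \<delta> * gibbs_mass \<beta> \<omega>}"
  note [measurable] = gibbs_mass_meas[OF assms(1)]
  have bad_sets: "bad \<in> sets M"
    unfolding bad_def by measurable
  have "emeasure M bad \<le> ennreal \<delta> * (\<integral>\<^sup>+ \<omega>. gibbs_mass \<beta> \<omega> * indicator (space M) \<omega> \<partial>M)"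
    unfolding bad_def by (rule nn_integral_Markov_inequality) measurable
  also have "(\<integral>\<^sup>+ \<omega>. gibbs_mass \<beta> \<omega> * indicator (space M) \<omega> \<partial>M) = (\<integral>\<^sup>+ \<omega>. gibbs_mass \<beta> \<omega> \<partial>M)"
    by (intro nn_integral_cong) simp
  also have "ennreal \<delta> * \<dots> \<le> ennreal \<delta> * 1"
    using nn_integral_gibbs_mass_le_1[OF assms(1)] by (rule mult_left_mono) simp
  finally have "prob bad \<le> \<delta>"
    using assms by (simp add: emeasure_eq_measure)
  moreover have "good_event \<beta> \<delta> = space M - bad"
    unfolding good_event_def bad_def by (auto simp: not_le)
  ultimately show ?thesis
    using bad_sets by (simp add: prob_compl)
qed

definition "smoothed_mgf_Z \<beta> c = (\<integral>\<omega>. exp (lam * (c \<bullet> Z \<omega>) + lam\<^sup>2 * (norm (Z \<omega>))\<^sup>2 / (2 * \<beta>)) \<partial>M)"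

lemma integrable_smoothed_mgf_Z:
  assumes "0 < \<beta>"
  shows "integrable M (\<lambda>\<omega>. exp (lam * (c \<bullet> Z \<omega>) + lam\<^sup>2 * (norm (Z \<omega>))\<^sup>2 / (2 * \<beta>)))"
proof (rule integrable_const_bound[where B = "exp (2 * norm c + 2 / \<beta>)"])
  have "lam\<^sup>2 * (norm (Z \<omega>))\<^sup>2 / (2 * \<beta>) \<le> 2 / \<beta>" for \<omega>
    using assms lam_sq_norm_Z_sq_le[of \<omega>] by (simp add: field_simps)
  then show "AE \<omega> in M. norm (exp (lam * (c \<bullet> Z \<omega>) + lam\<^sup>2 * (norm (Z \<omega>))\<^sup>2 / (2 * \<beta>)))
      \<le> exp (2 * norm c + 2 / \<beta>)"
    using lam_inner_Z_le[of c] by (simp add: add_mono)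
qed simp

lemma integral_gaussian_mgf_Z:
  assumes "0 < \<beta>"
  shows "integrable (gaussian \<beta> :: 'd measure) (\<lambda>x. mgf_Z (c + x))"
    and "(\<integral>x. mgf_Z (c + x) \<partial>(gaussian \<beta> :: 'd measure)) = smoothed_mgf_Z \<beta> c"
proof -
  interpret G: prob_space "gaussian \<beta> :: 'd measure" by (rule prob_space_gaussian[OF assms])
  interpret pair_sigma_finite M "gaussian \<beta> :: 'd measure" by unfold_locales
  have inner_mgf: "(\<integral>\<^sup>+ x. ennreal (exp (lam * ((c + x) \<bullet> Z \<omega>))) \<partial>(gaussian \<beta> :: 'd measure))
      = ennreal (exp (lam * (c \<bullet> Z \<omega>) + lam\<^sup>2 * (norm (Z \<omega>))\<^sup>2 / (2 * \<beta>)))" for \<omega>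
  proof -
    have "(\<integral>\<^sup>+ x. ennreal (exp (lam * ((c + x) \<bullet> Z \<omega>))) \<partial>(gaussian \<beta> :: 'd measure))
        = (\<integral>\<^sup>+ x. ennreal (exp (lam * (c \<bullet> Z \<omega>))) * ennreal (exp ((lam *\<^sub>R Z \<omega>) \<bullet> x)) \<partial>gaussian \<beta>)"
      by (simp add: ennreal_mult'[symmetric] exp_add[symmetric] inner_simps inner_commute algebra_simps)
    also have "\<dots> = ennreal (exp (lam * (c \<bullet> Z \<omega>))) * ennreal (exp ((norm (lam *\<^sub>R Z \<omega>))\<^sup>2 / (2 * \<beta>)))"
      using nn_integral_gaussian_exp_inner[OF assms, of "lam *\<^sub>R Z \<omega>"] by (subst nn_integral_cmult) auto
    finally show ?thesis
      by (simp add: ennreal_mult'[symmetric] exp_add[symmetric] power_mult_distrib)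
  qed
  have "(\<integral>\<^sup>+ x. ennreal (mgf_Z (c + x)) \<partial>(gaussian \<beta> :: 'd measure))
      = (\<integral>\<^sup>+ x. (\<integral>\<^sup>+ \<omega>. ennreal (exp (lam * ((c + x) \<bullet> Z \<omega>))) \<partial>M) \<partial>(gaussian \<beta> :: 'd measure))"
    by (simp add: nn_integral_exp_inner_Z)
  also have "\<dots> = (\<integral>\<^sup>+ \<omega>. (\<integral>\<^sup>+ x. ennreal (exp (lam * ((c + x) \<bullet> Z \<omega>))) \<partial>(gaussian \<beta> :: 'd measure)) \<partial>M)"
    by (rule Fubini') measurable
  also have "\<dots> = ennreal (smoothed_mgf_Z \<beta> c)"
    unfolding inner_mgf smoothed_mgf_Z_def by (simp add: nn_integral_eq_integral[OF integrable_smoothed_mgf_Z[OF assms]])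
  finally have nn: "(\<integral>\<^sup>+ x. ennreal (mgf_Z (c + x)) \<partial>(gaussian \<beta> :: 'd measure)) = ennreal (smoothed_mgf_Z \<beta> c)" .
  show int: "integrable (gaussian \<beta> :: 'd measure) (\<lambda>x. mgf_Z (c + x))"
    using nn by (intro integrableI_nonneg) (auto simp: mgf_Z_nonneg)
  have "0 \<le> smoothed_mgf_Z \<beta> c" unfolding smoothed_mgf_Z_def by simp
  then show "(\<integral>x. mgf_Z (c + x) \<partial>(gaussian \<beta> :: 'd measure)) = smoothed_mgf_Z \<beta> c"
    using nn by (simp add: nn_integral_eq_integral[OF int] mgf_Z_nonneg integral_nonneg_AE)
qed

lemma good_event_deviation:
  assumes "0 < \<beta>" "0 < \<delta>" "\<omega> \<in> good_event \<beta> \<delta>"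
  shows "lam * ((\<Sum>i<n. c \<bullet> thresh lam (Xs i \<omega>)) - real n * (c \<bullet> EY))
          < real n * (smoothed_mgf_Z \<beta> c - 1) + \<beta> * (norm c)\<^sup>2 / 2 + ln (1 / \<delta>)"
proof -
  interpret G: prob_space "gaussian \<beta> :: 'd measure" by (rule prob_space_gaussian[OF assms(1)])
  define A where "A = lam * ((\<Sum>i<n. c \<bullet> thresh lam (Xs i \<omega>)) - real n * (c \<bullet> EY)) + real n - \<beta> * (norm c)\<^sup>2 / 2"
  define w where "w = (\<Sum>i<n. lam *\<^sub>R thresh lam (Xs i \<omega>)) - (real n * lam) *\<^sub>R EY - \<beta> *\<^sub>R c"
  have shifted: "Phi \<omega> (c + x) - \<beta> * (c \<bullet> x) - \<beta> * (norm c)\<^sup>2 / 2 = A + w \<bullet> x - real n * mgf_Z (c + x)" for x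
    unfolding Phi_def log_mgf_bound_def A_def w_def
    by (simp add: inner_simps inner_sum_left inner_sum_right sum.distrib algebra_simps sum_distrib_left inner_commute)
  note int_w = integrable_gaussian_inner[OF assms(1), of w]
  note int_mgf = integral_gaussian_mgf_Z[OF assms(1), of c]
  have "ennreal (exp (A - real n * smoothed_mgf_Z \<beta> c)) \<le> gibbs_mass \<beta> \<omega>"
    using exp_integral_shift_le_nn_integral_gaussian[OF assms(1), of "Phi \<omega>" c] int_w int_mgf
    by (simp add: gibbs_mass_def shifted G.prob_space[simplified] integral_gaussian_inner[OF assms(1)])
  then have "ennreal \<delta> * ennreal (exp (A - real n * smoothed_mgf_Z \<beta> c)) \<le> ennreal \<delta> * gibbs_mass \<beta> \<omega>"
    by (rule mult_left_mono) simp
  also have "\<dots> < 1"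
    using assms(3) by (simp add: good_event_def)
  finally have "\<delta> * exp (A - real n * smoothed_mgf_Z \<beta> c) < 1"
    using assms(2) by (simp add: ennreal_mult'[symmetric] ennreal_less_iff del: ennreal_mult')
  then have "exp (A - real n * smoothed_mgf_Z \<beta> c) < exp (ln (1 / \<delta>))"
    using assms(2) by (simp add: field_simps)
  then show ?thesis unfolding A_def by (simp add: algebra_simps)
qed


lemma integrable_inner_Z_sq: "integrable M (\<lambda>\<omega>. (\<theta> \<bullet> Z \<omega>)\<^sup>2)"
proof (rule integrable_const_bound[where B = "(norm \<theta> * (2 / lam))\<^sup>2"])
  have "\<bar>\<theta> \<bullet> Z \<omega>\<bar> \<le> norm \<theta> * (2 / lam)" for \<omega>
    using Cauchy_Schwarz_ineq2[of \<theta> "Z \<omega>"] mult_left_mono[OF norm_Z_le[of \<omega>], of "norm \<theta>"] by simp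
  then show "AE \<omega> in M. norm ((\<theta> \<bullet> Z \<omega>)\<^sup>2) \<le> (norm \<theta> * (2 / lam))\<^sup>2"
    using lam_pos by (simp add: power2_le_iff_abs_le)
qed simp

lemma integrable_norm_Z_sq: "integrable M (\<lambda>\<omega>. (norm (Z \<omega>))\<^sup>2)"
  by (rule integrable_const_bound[where B = "(2 / lam)\<^sup>2"]) (auto intro!: power_mono norm_Z_le)

lemma smoothed_mgf_Z_sub_1_le:
  assumes "0 < \<beta>" "0 < \<mu>" "norm \<theta> = 1"
  shows "smoothed_mgf_Z \<beta> (\<mu> *\<^sub>R \<theta>) - 1 \<le> g2 (2 * \<mu>) / 2 * lam\<^sup>2 * \<mu>\<^sup>2 * (\<integral>\<omega>. (\<theta> \<bullet> Z \<omega>)\<^sup>2 \<partial>M)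
            + exp (2 * \<mu>) * g1 (2 / \<beta>) * lam\<^sup>2 * (\<integral>\<omega>. (norm (Z \<omega>))\<^sup>2 \<partial>M) / (2 * \<beta>)"
proof -
  define t where "t = (\<lambda>\<omega>. lam * ((\<mu> *\<^sub>R \<theta>) \<bullet> Z \<omega>))"
  define s where "s = (\<lambda>\<omega>. lam\<^sup>2 * (norm (Z \<omega>))\<^sup>2 / (2 * \<beta>))"
  have int_t: "integrable M t"
    unfolding t_def using integrable_Z by simp
  have int_exp: "integrable M (\<lambda>\<omega>. exp (t \<omega> + s \<omega>))"
    using integrable_smoothed_mgf_Z[OF assms(1), of "\<mu> *\<^sub>R \<theta>"] by (simp add: t_def s_def)
  have "integral\<^sup>L M t = 0"
    using integrable_Z by (simp add: t_def integral_Z)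
  then have "smoothed_mgf_Z \<beta> (\<mu> *\<^sub>R \<theta>) - 1 = (\<integral>\<omega>. exp (t \<omega> + s \<omega>) - 1 - t \<omega> \<partial>M)"
    using int_exp int_t by (simp add: smoothed_mgf_Z_def t_def s_def prob_space)
  also have "\<dots> \<le> (\<integral>\<omega>. g2 (2 * \<mu>) / 2 * lam\<^sup>2 * \<mu>\<^sup>2 * (\<theta> \<bullet> Z \<omega>)\<^sup>2
                    + exp (2 * \<mu>) * g1 (2 / \<beta>) * lam\<^sup>2 / (2 * \<beta>) * (norm (Z \<omega>))\<^sup>2 \<partial>M)"
  proof (rule integral_mono)
    show "integrable M (\<lambda>\<omega>. exp (t \<omega> + s \<omega>) - 1 - t \<omega>)"
      using int_exp int_t by simp
    show "integrable M (\<lambda>\<omega>. g2 (2 * \<mu>) / 2 * lam\<^sup>2 * \<mu>\<^sup>2 * (\<theta> \<bullet> Z \<omega>)\<^sup>2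
                    + exp (2 * \<mu>) * g1 (2 / \<beta>) * lam\<^sup>2 / (2 * \<beta>) * (norm (Z \<omega>))\<^sup>2)"
      using integrable_inner_Z_sq integrable_norm_Z_sq by simp
    fix \<omega>
    have "t \<omega> \<le> 2 * \<mu>"
      using lam_inner_Z_le[of "\<mu> *\<^sub>R \<theta>" \<omega>] assms by (simp add: t_def)
    moreover have "s \<omega> \<le> 2 / \<beta>"
      using assms(1) lam_sq_norm_Z_sq_le[of \<omega>] by (simp add: s_def field_simps)
    moreover have "0 \<le> s \<omega>"
      using assms(1) by (simp add: s_def)
    ultimately have "exp (t \<omega> + s \<omega>) - 1 - t \<omega> \<le> (t \<omega>)\<^sup>2 / 2 * g2 (2 * \<mu>) + exp (2 * \<mu>) * (s \<omega> * g1 (2 / \<beta>))"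
      using assms(2) by (intro exp_add_sub_one_le) auto
    then show "exp (t \<omega> + s \<omega>) - 1 - t \<omega> \<le> g2 (2 * \<mu>) / 2 * lam\<^sup>2 * \<mu>\<^sup>2 * (\<theta> \<bullet> Z \<omega>)\<^sup>2
                    + exp (2 * \<mu>) * g1 (2 / \<beta>) * lam\<^sup>2 / (2 * \<beta>) * (norm (Z \<omega>))\<^sup>2"
      by (simp add: t_def s_def power_mult_distrib field_simps)
  qed
  also have "\<dots> = g2 (2 * \<mu>) / 2 * lam\<^sup>2 * \<mu>\<^sup>2 * (\<integral>\<omega>. (\<theta> \<bullet> Z \<omega>)\<^sup>2 \<partial>M)
            + exp (2 * \<mu>) * g1 (2 / \<beta>) * lam\<^sup>2 * (\<integral>\<omega>. (norm (Z \<omega>))\<^sup>2 \<partial>M) / (2 * \<beta>)"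
    using integrable_inner_Z_sq integrable_norm_Z_sq by simp
  finally show ?thesis .
qed

lemma integral_inner_Z_sq_le: "(\<integral>\<omega>. (\<theta> \<bullet> Z \<omega>)\<^sup>2 \<partial>M) \<le> (\<integral>\<omega>. (\<theta> \<bullet> (Y \<omega> - u))\<^sup>2 \<partial>M)"
proof -
  have "(\<theta> \<bullet> (Y \<omega> - u))\<^sup>2 = (\<theta> \<bullet> Z \<omega>)\<^sup>2 + 2 * (\<theta> \<bullet> (EY - u)) * (\<theta> \<bullet> Z \<omega>) + (\<theta> \<bullet> (EY - u))\<^sup>2" for \<omega>
    by (simp add: Z_def inner_diff_right power2_eq_square algebra_simps)
  then have "(\<integral>\<omega>. (\<theta> \<bullet> (Y \<omega> - u))\<^sup>2 \<partial>M) = (\<integral>\<omega>. (\<theta> \<bullet> Z \<omega>)\<^sup>2 \<partial>M) + (\<theta> \<bullet> (EY - u))\<^sup>2"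
    using integrable_inner_Z_sq integrable_Z by (simp add: prob_space integral_Z)
  then show ?thesis by simp
qed

lemma integral_norm_Z_sq_le: "(\<integral>\<omega>. (norm (Z \<omega>))\<^sup>2 \<partial>M) \<le> (\<integral>\<omega>. (norm (Y \<omega> - u))\<^sup>2 \<partial>M)"
proof -
  have "(norm (Y \<omega> - u))\<^sup>2 = (norm (Z \<omega>))\<^sup>2 + 2 * ((EY - u) \<bullet> Z \<omega>) + (norm (EY - u))\<^sup>2" for \<omega>
    unfolding power2_norm_eq_inner Z_def by (simp add: inner_simps inner_commute)
  then have "(\<integral>\<omega>. (norm (Y \<omega> - u))\<^sup>2 \<partial>M) = (\<integral>\<omega>. (norm (Z \<omega>))\<^sup>2 \<partial>M) + (norm (EY - u))\<^sup>2"
    using integrable_norm_Z_sq integrable_Z by (simp add: prob_space integral_Z)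
  then show ?thesis by simp
qed

end


section \<open>Variance and bias of the thresholded variable\<close>

locale thresholded_sample_L2 = thresholded_sample +
  assumes X_sq: "integrable M (\<lambda>\<omega>. (norm (X \<omega>))\<^sup>2)"
begin

lemma integrable_norm_X: "integrable M (\<lambda>\<omega>. norm (X \<omega>))"
  by (rule square_integrable_imp_integrable) (use X_sq in simp_all)

lemma integrable_X: "integrable M X"
  using integrable_norm_X integrable_norm_iff[of X M] by simp

lemma integrable_norm_X_sub_sq: "integrable M (\<lambda>\<omega>. (norm (X \<omega> - u))\<^sup>2)"
proof (rule Bochner_Integration.integrable_bound)
  show "integrable M (\<lambda>\<omega>. 2 * (norm (X \<omega>))\<^sup>2 + 2 * (norm u)\<^sup>2)"
    using X_sq by simp
  have "(norm (X \<omega> - u))\<^sup>2 \<le> 2 * (norm (X \<omega>))\<^sup>2 + 2 * (norm u)\<^sup>2" for \<omega>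
  proof -
    have "(norm (X \<omega> - u))\<^sup>2 \<le> (norm (X \<omega>) + norm u)\<^sup>2"
      using norm_triangle_ineq4[of "X \<omega>" u] by (intro power_mono) auto
    also have "\<dots> \<le> 2 * (norm (X \<omega>))\<^sup>2 + 2 * (norm u)\<^sup>2"
      using sum_squares_bound[of "norm (X \<omega>)" "norm u"] by (simp add: power2_eq_square algebra_simps)
    finally show ?thesis .
  qed
  then show "AE \<omega> in M. norm ((norm (X \<omega> - u))\<^sup>2) \<le> norm (2 * (norm (X \<omega>))\<^sup>2 + 2 * (norm u)\<^sup>2)"
    by simp
qed simp

lemma integrable_inner_X_sub_sq: "norm \<theta> = 1 \<Longrightarrow> integrable M (\<lambda>\<omega>. (\<theta> \<bullet> (X \<omega> - u))\<^sup>2)"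
proof (rule Bochner_Integration.integrable_bound[OF integrable_norm_X_sub_sq[of u]])
  assume "norm \<theta> = 1"
  then have "(\<theta> \<bullet> (X \<omega> - u))\<^sup>2 \<le> (norm (X \<omega> - u))\<^sup>2" for \<omega>
    using Cauchy_Schwarz_ineq2[of \<theta> "X \<omega> - u"] by (simp add: power2_le_iff_abs_le)
  then show "AE \<omega> in M. norm ((\<theta> \<bullet> (X \<omega> - u))\<^sup>2) \<le> norm ((norm (X \<omega> - u))\<^sup>2)"
    by simp
qed simp

lemma integrable_shrinkage_X: "integrable M (\<lambda>\<omega>. shrinkage lam (X \<omega>))"
  by (rule integrable_const_bound[where B = 1]) (auto simp: shrinkage_nonneg shrinkage_le_1 lam_pos)

lemma integrable_shrinkage_negpart: "integrable M (\<lambda>\<omega>. shrinkage lam (X \<omega>) * negpart (\<theta> \<bullet> (X \<omega> - u)))"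
proof (rule Bochner_Integration.integrable_bound)
  show "integrable M (\<lambda>\<omega>. norm \<theta> * (norm (X \<omega>) + norm u))"
    using integrable_norm_X by simp
  show "(\<lambda>\<omega>. shrinkage lam (X \<omega>) * negpart (\<theta> \<bullet> (X \<omega> - u))) \<in> borel_measurable M"
    unfolding negpart_def by measurable
  have "shrinkage lam (X \<omega>) * negpart (\<theta> \<bullet> (X \<omega> - u)) \<le> norm \<theta> * (norm (X \<omega>) + norm u)" for \<omega>
  proof -
    have "shrinkage lam (X \<omega>) * negpart (\<theta> \<bullet> (X \<omega> - u)) \<le> \<bar>\<theta> \<bullet> (X \<omega> - u)\<bar>"
      using mult_left_le_one_le[OF _ shrinkage_nonneg[OF lam_pos] shrinkage_le_1[OF lam_pos]]
      by (smt (verit) negpart_def)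
    also have "\<dots> \<le> norm \<theta> * (norm (X \<omega>) + norm u)"
      using Cauchy_Schwarz_ineq2[of \<theta> "X \<omega> - u"] norm_triangle_ineq4[of "X \<omega>" u]
      by (meson mult_left_mono norm_ge_zero order_trans)
    finally show ?thesis .
  qed
  then show "AE \<omega> in M. norm (shrinkage lam (X \<omega>) * negpart (\<theta> \<bullet> (X \<omega> - u)))
      \<le> norm (norm \<theta> * (norm (X \<omega>) + norm u))"
    by (simp add: negpart_def abs_mult shrinkage_nonneg[OF lam_pos])
qed

lemma integral_norm_Z_sq_le_X: "(\<integral>\<omega>. (norm (Z \<omega>))\<^sup>2 \<partial>M) \<le> (\<integral>\<omega>. (norm (X \<omega> - u))\<^sup>2 \<partial>M)"
proof -
  have integrable_Y_sub: "integrable M (\<lambda>\<omega>. (norm (Y \<omega> - thresh lam u))\<^sup>2)"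
    by (rule integrable_const_bound[where B = "(1 / lam + norm (thresh lam u))\<^sup>2"])
      (auto intro!: power_mono order_trans[OF norm_triangle_ineq4] simp: norm_Y_le)
  have "(\<integral>\<omega>. (norm (Z \<omega>))\<^sup>2 \<partial>M) \<le> (\<integral>\<omega>. (norm (Y \<omega> - thresh lam u))\<^sup>2 \<partial>M)"
    by (rule integral_norm_Z_sq_le)
  also have "\<dots> \<le> (\<integral>\<omega>. (norm (X \<omega> - u))\<^sup>2 \<partial>M)"
    using integrable_Y_sub integrable_norm_X_sub_sq thresh_lipschitz[OF lam_pos]
    by (intro integral_mono) (auto simp: Y_def intro!: power_mono)
  finally show ?thesis .
qed

lemma integral_inner_Z_sq_le_X:
  assumes "norm \<theta> = 1"
  shows "(\<integral>\<omega>. (\<theta> \<bullet> Z \<omega>)\<^sup>2 \<partial>M)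
    \<le> (\<integral>\<omega>. (\<theta> \<bullet> (X \<omega> - u))\<^sup>2 \<partial>M) + (norm u)\<^sup>2 * (\<integral>\<omega>. shrinkage lam (X \<omega>) \<partial>M)"
proof -
  have integrable_Y_sub: "integrable M (\<lambda>\<omega>. (\<theta> \<bullet> (Y \<omega> - u))\<^sup>2)"
  proof (rule integrable_const_bound[where B = "(1 / lam + norm u)\<^sup>2"])
    have "\<bar>\<theta> \<bullet> (Y \<omega> - u)\<bar> \<le> 1 / lam + norm u" for \<omega>
      using Cauchy_Schwarz_ineq2[of \<theta> "Y \<omega> - u"] norm_triangle_ineq4[of "Y \<omega>" u] norm_Y_le[of \<omega>] assms
      by simp
    then show "AE \<omega> in M. norm ((\<theta> \<bullet> (Y \<omega> - u))\<^sup>2) \<le> (1 / lam + norm u)\<^sup>2"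
      using lam_pos by (simp add: power2_le_iff_abs_le)
  qed simp
  have pointwise: "(\<theta> \<bullet> (Y \<omega> - u))\<^sup>2 \<le> (\<theta> \<bullet> (X \<omega> - u))\<^sup>2 + (norm u)\<^sup>2 * shrinkage lam (X \<omega>)" for \<omega>
  proof -
    define a where "a = shrinkage lam (X \<omega>)"
    have a: "0 \<le> a" "a \<le> 1"
      using shrinkage_nonneg[OF lam_pos] shrinkage_le_1[OF lam_pos] by (simp_all add: a_def)
    have "\<theta> \<bullet> (Y \<omega> - u) = (1 - a) * (\<theta> \<bullet> (X \<omega> - u)) + a * (- (\<theta> \<bullet> u))"
      by (simp add: Y_def thresh_eq_shrinkage a_def inner_simps algebra_simps)
    then have "(\<theta> \<bullet> (Y \<omega> - u))\<^sup>2 \<le> (\<theta> \<bullet> (X \<omega> - u))\<^sup>2 + a * (- (\<theta> \<bullet> u))\<^sup>2"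
      using convex_comb_sq_le[OF a] by presburger
    moreover have "a * (- (\<theta> \<bullet> u))\<^sup>2 \<le> a * (norm u)\<^sup>2"
      using Cauchy_Schwarz_ineq2[of \<theta> u] assms a
      by (intro mult_left_mono) (auto simp: power2_le_iff_abs_le)
    ultimately show ?thesis by (simp add: a_def mult.commute)
  qed
  have "(\<integral>\<omega>. (\<theta> \<bullet> Z \<omega>)\<^sup>2 \<partial>M) \<le> (\<integral>\<omega>. (\<theta> \<bullet> (Y \<omega> - u))\<^sup>2 \<partial>M)"
    by (rule integral_inner_Z_sq_le)
  also have "\<dots> \<le> (\<integral>\<omega>. (\<theta> \<bullet> (X \<omega> - u))\<^sup>2 + (norm u)\<^sup>2 * shrinkage lam (X \<omega>) \<partial>M)"
    using integrable_Y_sub integrable_inner_X_sub_sq[OF assms] integrable_shrinkage_X pointwise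
    by (intro integral_mono) auto
  also have "\<dots> = (\<integral>\<omega>. (\<theta> \<bullet> (X \<omega> - u))\<^sup>2 \<partial>M) + (norm u)\<^sup>2 * (\<integral>\<omega>. shrinkage lam (X \<omega>) \<partial>M)"
    using integrable_inner_X_sub_sq[OF assms] integrable_shrinkage_X by simp
  finally show ?thesis .
qed

lemma inner_EY_sub_le:
  assumes "norm \<theta> = 1"
  shows "\<theta> \<bullet> (EY - integral\<^sup>L M X) \<le> (\<integral>\<omega>. shrinkage lam (X \<omega>) * negpart (\<theta> \<bullet> (X \<omega> - integral\<^sup>L M X)) \<partial>M)
                          + norm (integral\<^sup>L M X) * (\<integral>\<omega>. shrinkage lam (X \<omega>) \<partial>M)"
proof -
  let ?m = "integral\<^sup>L M X"
  have pointwise: "\<theta> \<bullet> (Y \<omega> - X \<omega>) \<le> shrinkage lam (X \<omega>) * negpart (\<theta> \<bullet> (X \<omega> - ?m)) + norm ?m * shrinkage lam (X \<omega>)"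
    for \<omega>
  proof -
    define a where "a = shrinkage lam (X \<omega>)"
    have "0 \<le> a" using shrinkage_nonneg[OF lam_pos] by (simp add: a_def)
    have "\<theta> \<bullet> (Y \<omega> - X \<omega>) = a * (- (\<theta> \<bullet> (X \<omega> - ?m))) + a * (- (\<theta> \<bullet> ?m))"
      by (simp add: Y_def thresh_eq_shrinkage a_def inner_simps algebra_simps)
    also have "\<dots> \<le> a * negpart (\<theta> \<bullet> (X \<omega> - ?m)) + a * norm ?m"
      using \<open>0 \<le> a\<close> Cauchy_Schwarz_ineq2[of \<theta> ?m] assms
      by (intro add_mono mult_left_mono) (auto simp: negpart_def)
    finally show ?thesis by (simp add: a_def mult.commute)
  qed
  have "\<theta> \<bullet> (EY - ?m) = (\<integral>\<omega>. \<theta> \<bullet> (Y \<omega> - X \<omega>) \<partial>M)"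
    unfolding EY_def using integrable_Y integrable_X by simp
  also have "\<dots> \<le> (\<integral>\<omega>. shrinkage lam (X \<omega>) * negpart (\<theta> \<bullet> (X \<omega> - ?m)) + norm ?m * shrinkage lam (X \<omega>) \<partial>M)"
    using integrable_Y integrable_X integrable_shrinkage_negpart integrable_shrinkage_X pointwise
    by (intro integral_mono) auto
  also have "\<dots> = (\<integral>\<omega>. shrinkage lam (X \<omega>) * negpart (\<theta> \<bullet> (X \<omega> - ?m)) \<partial>M)
                  + norm ?m * (\<integral>\<omega>. shrinkage lam (X \<omega>) \<partial>M)"
    using integrable_shrinkage_negpart integrable_shrinkage_X by simp
  finally show ?thesis .
qed

lemma integral_shrinkage_negpart_le:
  assumes "0 < p"
  shows "ennreal (\<integral>\<omega>. shrinkage lam (X \<omega>) * negpart (\<theta> \<bullet> (X \<omega> - u)) \<partial>M)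
     \<le> ennreal (psi_const p * lam powr p) * (\<integral>\<^sup>+ \<omega>. ennreal (norm (X \<omega>) powr p * negpart (\<theta> \<bullet> (X \<omega> - u))) \<partial>M)"
proof -
  have "ennreal (\<integral>\<omega>. shrinkage lam (X \<omega>) * negpart (\<theta> \<bullet> (X \<omega> - u)) \<partial>M)
      = (\<integral>\<^sup>+ \<omega>. ennreal (shrinkage lam (X \<omega>) * negpart (\<theta> \<bullet> (X \<omega> - u))) \<partial>M)"
    by (rule nn_integral_eq_integral[OF integrable_shrinkage_negpart, symmetric])
      (simp add: negpart_def shrinkage_nonneg[OF lam_pos])
  also have "\<dots> \<le> (\<integral>\<^sup>+ \<omega>. ennreal (psi_const p * lam powr p) * ennreal (norm (X \<omega>) powr p * negpart (\<theta> \<bullet> (X \<omega> - u))) \<partial>M)"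
  proof (rule nn_integral_mono)
    fix \<omega>
    have "shrinkage lam (X \<omega>) * negpart (\<theta> \<bullet> (X \<omega> - u))
        \<le> psi_const p * lam powr p * (norm (X \<omega>) powr p * negpart (\<theta> \<bullet> (X \<omega> - u)))"
      using shrinkage_le_powr[OF assms lam_pos, of "X \<omega>"]
      by (subst mult.assoc[symmetric]) (intro mult_right_mono, auto simp: negpart_def mult.assoc)
    then show "ennreal (shrinkage lam (X \<omega>) * negpart (\<theta> \<bullet> (X \<omega> - u)))
        \<le> ennreal (psi_const p * lam powr p) * ennreal (norm (X \<omega>) powr p * negpart (\<theta> \<bullet> (X \<omega> - u)))"
      using psi_const_nonneg[OF assms] by (simp add: ennreal_mult[symmetric] ennreal_leI negpart_def)
  qed
  also have "\<dots> = ennreal (psi_const p * lam powr p) * (\<integral>\<^sup>+ \<omega>. ennreal (norm (X \<omega>) powr p * negpart (\<theta> \<bullet> (X \<omega> - u))) \<partial>M)"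
    by (rule nn_integral_cmult) (simp add: negpart_def)
  finally show ?thesis .
qed

lemma integral_shrinkage_le:
  assumes "0 < p"
  shows "ennreal (\<integral>\<omega>. shrinkage lam (X \<omega>) \<partial>M)
     \<le> ennreal (psi_const p * lam powr p) * (\<integral>\<^sup>+ \<omega>. ennreal (norm (X \<omega>) powr p) \<partial>M)"
proof -
  have "ennreal (\<integral>\<omega>. shrinkage lam (X \<omega>) \<partial>M) = (\<integral>\<^sup>+ \<omega>. ennreal (shrinkage lam (X \<omega>)) \<partial>M)"
    by (rule nn_integral_eq_integral[OF integrable_shrinkage_X, symmetric]) (simp add: shrinkage_nonneg[OF lam_pos])
  also have "\<dots> \<le> (\<integral>\<^sup>+ \<omega>. ennreal (psi_const p * lam powr p) * ennreal (norm (X \<omega>) powr p) \<partial>M)"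
    using shrinkage_le_powr[OF assms lam_pos] psi_const_nonneg[OF assms]
    by (intro nn_integral_mono) (simp add: ennreal_mult[symmetric] ennreal_leI)
  also have "\<dots> = ennreal (psi_const p * lam powr p) * (\<integral>\<^sup>+ \<omega>. ennreal (norm (X \<omega>) powr p) \<partial>M)"
    by (rule nn_integral_cmult) simp
  finally show ?thesis .
qed

end


section \<open>Choice of the parameters\<close>

lemma optimized_deviation_bound:
  fixes a v L N b T \<mu> \<beta> lam P W :: real
  assumes pos: "0 < a" "0 < v" "0 < L" "0 < N" "0 < b" "0 < T" "0 < \<mu>"
    and lam: "lam = 1 / \<mu> * sqrt (2 * L / (a * v * N))"
    and \<beta>: "\<beta> = lam * sqrt (b * T * N) / \<mu>"
    and bound: "lam * (\<mu> * N * P) \<le> N * (a / 2 * lam\<^sup>2 * \<mu>\<^sup>2 * (v + W) + b * lam\<^sup>2 * T / (2 * \<beta>)) + \<beta> * \<mu>\<^sup>2 / 2 + L"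
  shows "P \<le> sqrt (2 * a * v * L / N) + sqrt (b * T / N) + sqrt (a * L / (2 * v * N)) * W"
proof -
  define s where "s = sqrt (2 * L / (a * v * N))"
  define r where "r = sqrt (b * T * N)"
  have s: "0 < s" "s\<^sup>2 = 2 * L / (a * v * N)" and r: "0 < r" "r\<^sup>2 = b * T * N"
    using pos by (simp_all add: s_def r_def)
  have lam_s: "lam * \<mu> = s" and \<beta>_r: "\<beta> = lam * r / \<mu>" and "0 < lam"
    using pos by (simp_all add: lam \<beta> s_def r_def)
  have "s * N * P \<le> N * (a / 2 * s\<^sup>2 * (v + W) + b * T / (2 * r) * s) + r * s / 2 + L"
    using bound pos \<open>0 < lam\<close> r(1)
    by (simp add: lam_s[symmetric] \<beta>_r power2_eq_square field_simps)
  then have "P \<le> (N * (a / 2 * s\<^sup>2 * (v + W) + b * T / (2 * r) * s) + r * s / 2 + L) / (s * N)"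
    using s(1) pos(4) by (simp add: pos_le_divide_eq mult.commute mult.left_commute)
  also have "\<dots> = (a * s / 2 * v + L / (s * N)) + (b * T / (2 * r) + r / (2 * N)) + a * s / 2 * W"
    using s(1) pos(4) r(1) by (simp add: field_simps power2_eq_square)
  also have "a * s / 2 * v + L / (s * N) = sqrt (2 * a * v * L / N)"
    using s pos by (intro real_sqrt_unique[symmetric]) (auto simp: power2_eq_square field_simps)
  also have "b * T / (2 * r) + r / (2 * N) = sqrt (b * T / N)"
    using r pos by (intro real_sqrt_unique[symmetric]) (auto simp: power2_eq_square field_simps)
  also have "a * s / 2 = sqrt (a * L / (2 * v * N))"
    using s pos by (intro real_sqrt_unique[symmetric]) (auto simp: power2_eq_square field_simps)
  finally show ?thesis .
qed

lemma two_div_beta_le: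
  fixes a v L N b T \<mu> \<beta> lam :: real
  assumes pos: "0 < a" "0 < v" "0 < L" "0 < N" "1 \<le> b" "0 < T" "0 < \<mu>"
    and lam: "lam = 1 / \<mu> * sqrt (2 * L / (a * v * N))"
    and \<beta>: "\<beta> = lam * sqrt (b * T * N) / \<mu>"
  shows "2 / \<beta> \<le> \<mu>\<^sup>2 * sqrt (2 * a * v / (T * L))"
proof (rule power2_le_imp_le)
  have "0 < \<beta>"
    using pos by (simp add: \<beta> lam)
  have "\<beta>\<^sup>2 = 2 * L * b * T / (a * v * \<mu> ^ 4)"
    using pos by (simp add: \<beta> lam power_mult_distrib power_divide field_simps power2_eq_square power4_eq_xxxx)
  then have "(2 / \<beta>)\<^sup>2 = 2 * a * v * \<mu> ^ 4 / (L * b * T)"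
    using pos \<open>0 < \<beta>\<close> by (simp add: power_divide field_simps power2_eq_square)
  also have "\<dots> \<le> 2 * a * v * \<mu> ^ 4 / (L * T)"
    using pos by (intro divide_left_mono) (auto simp: mult_le_cancel_left1 mult_right_mono)
  also have "\<dots> = (\<mu>\<^sup>2 * sqrt (2 * a * v / (T * L)))\<^sup>2"
    using pos by (simp add: power_mult_distrib power2_eq_square power4_eq_xxxx field_simps)
  finally show "(2 / \<beta>)\<^sup>2 \<le> (\<mu>\<^sup>2 * sqrt (2 * a * v / (T * L)))\<^sup>2" .
qed (use assms in simp)


lemma ennreal_mult_divide_ennreal:
  assumes "0 \<le> x" "0 < y"
  shows "ennreal x * S / ennreal y = ennreal (x / y) * S"
proof -
  have "ennreal x * S / ennreal y = S * (ennreal x / ennreal y)"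
    by (simp add: ennreal_times_divide mult.commute)
  then show ?thesis
    using assms by (simp add: divide_ennreal mult.commute)
qed

lemma exists_unit_inner_eq_norm:
  fixes d :: "'a::euclidean_space"
  obtains \<theta> where "norm \<theta> = 1" "norm d = \<theta> \<bullet> d"
proof (cases "d = 0")
  case True
  obtain e :: 'a where "e \<in> Basis"
    using nonempty_Basis by blast
  with True show ?thesis using that[of e] by simp
next
  case False
  then show ?thesis
    using that[of "(1 / norm d) *\<^sub>R d"] by (simp add: power2_norm_eq_inner[symmetric] power2_eq_square)
qed

locale thresholded_mean_estimation = thresholded_sample_L2 +
  fixes \<delta> v \<mu> a T b :: real and m
  assumes delta_pos: "0 < \<delta>" and delta_less_1: "\<delta> < 1"
    and v_pos: "0 < v" and mu_pos: "0 < \<mu>"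
    and m_eq: "m = (\<integral>\<omega>. X \<omega> \<partial>M)"
    and v_bound: "\<forall>\<theta>. norm \<theta> = 1 \<longrightarrow> (\<integral>\<omega>. (\<theta> \<bullet> (X \<omega> - m))\<^sup>2 \<partial>M) \<le> v"
    and a_eq: "a = g2 (2 * \<mu>)"
    and lam_eq: "lam = (1 / \<mu>) * sqrt (2 * ln (1 / \<delta>) / (a * v * real n))"
    and T_eq: "T = max (\<integral>\<omega>. (norm (X \<omega> - m))\<^sup>2 \<partial>M) v"
    and b_eq: "b = exp (2 * \<mu>) * g1 (\<mu>\<^sup>2 * sqrt (2 * a * v / (T * ln (1 / \<delta>))))"
begin

definition "\<beta> = lam * sqrt (b * T * real n) / \<mu>"

definition "coef p = 1 / (p + 1) * (p / ((p + 1) * \<mu>)) powr p * (2 * ln (1 / \<delta>) / (a * v)) powr (p / 2)"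

definition "shrinkage_bias \<theta> = (\<integral>\<omega>. shrinkage lam (X \<omega>) * negpart (\<theta> \<bullet> (X \<omega> - m)) \<partial>M)"

definition "mean_shrinkage = (\<integral>\<omega>. shrinkage lam (X \<omega>) \<partial>M)"

lemma ln_inverse_delta_pos: "0 < ln (1 / \<delta>)"
  using delta_pos delta_less_1 by simp

lemma a_ge_1: "1 \<le> a"
  using g2_ge_1[of "2 * \<mu>"] mu_pos by (simp add: a_eq)

lemma v_le_T: "v \<le> T"
  by (simp add: T_eq)

lemma b_ge_1: "1 \<le> b"
proof -
  have "0 \<le> \<mu>\<^sup>2 * sqrt (2 * a * v / (T * ln (1 / \<delta>)))"
    using a_ge_1 v_pos v_le_T ln_inverse_delta_pos by simp
  then have "1 * 1 \<le> exp (2 * \<mu>) * g1 (\<mu>\<^sup>2 * sqrt (2 * a * v / (T * ln (1 / \<delta>))))"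
    using mu_pos g1_ge_1 by (intro mult_mono) auto
  then show ?thesis by (simp add: b_eq)
qed

lemma beta_pos: "0 < \<beta>"
  using lam_pos b_ge_1 v_pos v_le_T n_pos mu_pos by (simp add: \<beta>_def)

text \<open>The constant \<open>b\<close> is chosen exactly so that it dominates the factor produced by \<open>smoothed_mgf_Z_sub_1_le\<close>.\<close>

lemma exp_g1_le_b: "exp (2 * \<mu>) * g1 (2 / \<beta>) \<le> b"
proof -
  have "2 / \<beta> \<le> \<mu>\<^sup>2 * sqrt (2 * a * v / (T * ln (1 / \<delta>)))"
    using a_ge_1 v_pos ln_inverse_delta_pos n_pos b_ge_1 v_le_T mu_pos
    by (intro two_div_beta_le[OF _ _ _ _ _ _ _ lam_eq \<beta>_def]) auto
  then show ?thesis
    using beta_pos by (simp add: b_eq g1_mono)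
qed

lemma smoothed_mgf_Z_sub_1_le_parameters:
  assumes "norm \<theta> = 1"
  shows "smoothed_mgf_Z \<beta> (\<mu> *\<^sub>R \<theta>) - 1
    \<le> a / 2 * lam\<^sup>2 * \<mu>\<^sup>2 * (v + (norm m)\<^sup>2 * mean_shrinkage) + b * lam\<^sup>2 * T / (2 * \<beta>)"
proof -
  define W where "W = (norm m)\<^sup>2 * mean_shrinkage"
  have "(\<integral>\<omega>. (\<theta> \<bullet> (X \<omega> - m))\<^sup>2 \<partial>M) \<le> v"
    using v_bound assms by blast
  then have var_inner: "(\<integral>\<omega>. (\<theta> \<bullet> Z \<omega>)\<^sup>2 \<partial>M) \<le> v + W"
    using integral_inner_Z_sq_le_X[OF assms, of m] unfolding W_def mean_shrinkage_def by linarith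
  have var_norm: "(\<integral>\<omega>. (norm (Z \<omega>))\<^sup>2 \<partial>M) \<le> T"
    using integral_norm_Z_sq_le_X[of m] by (simp add: T_eq)
  have "exp (2 * \<mu>) * g1 (2 / \<beta>) * (lam\<^sup>2 * (\<integral>\<omega>. (norm (Z \<omega>))\<^sup>2 \<partial>M)) \<le> b * (lam\<^sup>2 * T)"
    using exp_g1_le_b var_norm b_ge_1 by (intro mult_mono mult_left_mono) auto
  then have "exp (2 * \<mu>) * g1 (2 / \<beta>) * lam\<^sup>2 * (\<integral>\<omega>. (norm (Z \<omega>))\<^sup>2 \<partial>M) / (2 * \<beta>) \<le> b * lam\<^sup>2 * T / (2 * \<beta>)"
    using beta_pos by (intro divide_right_mono) (auto simp: mult.assoc)
  moreover have "a / 2 * lam\<^sup>2 * \<mu>\<^sup>2 * (\<integral>\<omega>. (\<theta> \<bullet> Z \<omega>)\<^sup>2 \<partial>M) \<le> a / 2 * lam\<^sup>2 * \<mu>\<^sup>2 * (v + W)"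
    using var_inner a_ge_1 by (intro mult_left_mono) auto
  ultimately show ?thesis
    using smoothed_mgf_Z_sub_1_le[OF beta_pos mu_pos assms] by (simp add: a_eq W_def)
qed

lemma inner_deviation_le:
  assumes "\<omega> \<in> good_event \<beta> \<delta>" "norm \<theta> = 1"
  shows "\<theta> \<bullet> ((1 / real n) *\<^sub>R (\<Sum>i<n. thresh lam (Xs i \<omega>)) - m)
    \<le> sqrt (2 * a * v * ln (1 / \<delta>) / real n) + sqrt (b * T / real n) + shrinkage_bias \<theta>
       + norm m * (1 + sqrt (a * ln (1 / \<delta>) / (2 * v * real n)) * norm m) * mean_shrinkage"
proof -
  define P where "P = \<theta> \<bullet> ((1 / real n) *\<^sub>R (\<Sum>i<n. thresh lam (Xs i \<omega>)) - EY)"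
  define W where "W = (norm m)\<^sup>2 * mean_shrinkage"
  have "0 < real n" using n_pos by simp
  have sum_eq: "(\<Sum>i<n. (\<mu> *\<^sub>R \<theta>) \<bullet> thresh lam (Xs i \<omega>)) - real n * ((\<mu> *\<^sub>R \<theta>) \<bullet> EY) = \<mu> * real n * P"
    using \<open>0 < real n\<close> by (simp add: P_def inner_diff_right inner_sum_right sum_distrib_left field_simps)
  have "smoothed_mgf_Z \<beta> (\<mu> *\<^sub>R \<theta>) - 1 \<le> a / 2 * lam\<^sup>2 * \<mu>\<^sup>2 * (v + W) + b * lam\<^sup>2 * T / (2 * \<beta>)"
    using smoothed_mgf_Z_sub_1_le_parameters[OF assms(2)] by (simp add: W_def)
  then have "real n * (smoothed_mgf_Z \<beta> (\<mu> *\<^sub>R \<theta>) - 1) \<le> real n * (a / 2 * lam\<^sup>2 * \<mu>\<^sup>2 * (v + W) + b * lam\<^sup>2 * T / (2 * \<beta>))"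
    by (rule mult_left_mono) simp
  moreover have "lam * (\<mu> * real n * P) < real n * (smoothed_mgf_Z \<beta> (\<mu> *\<^sub>R \<theta>) - 1) + \<beta> * \<mu>\<^sup>2 / 2 + ln (1 / \<delta>)"
    using good_event_deviation[OF beta_pos delta_pos assms(1), of "\<mu> *\<^sub>R \<theta>"] assms(2) mu_pos
    unfolding sum_eq by simp
  ultimately have "lam * (\<mu> * real n * P)
      \<le> real n * (a / 2 * lam\<^sup>2 * \<mu>\<^sup>2 * (v + W) + b * lam\<^sup>2 * T / (2 * \<beta>)) + \<beta> * \<mu>\<^sup>2 / 2 + ln (1 / \<delta>)"
    by linarith
  then have "P \<le> sqrt (2 * a * v * ln (1 / \<delta>) / real n) + sqrt (b * T / real n)
                + sqrt (a * ln (1 / \<delta>) / (2 * v * real n)) * W"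
    using a_ge_1 v_pos ln_inverse_delta_pos \<open>0 < real n\<close> b_ge_1 v_le_T mu_pos
    by (intro optimized_deviation_bound[OF _ _ _ _ _ _ _ lam_eq \<beta>_def]) (auto simp: mult.assoc)
  moreover have "\<theta> \<bullet> (EY - m) \<le> shrinkage_bias \<theta> + norm m * mean_shrinkage"
    using inner_EY_sub_le[OF assms(2)] unfolding shrinkage_bias_def mean_shrinkage_def by (simp add: m_eq)
  moreover have "\<theta> \<bullet> ((1 / real n) *\<^sub>R (\<Sum>i<n. thresh lam (Xs i \<omega>)) - m) = P + \<theta> \<bullet> (EY - m)"
    by (simp add: P_def inner_diff_right)
  ultimately show ?thesis
    by (simp add: W_def power2_eq_square algebra_simps)
qed


lemma norm_deviation_le:
  assumes "\<omega> \<in> good_event \<beta> \<delta>"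
  obtains \<theta> where "norm \<theta> = 1"
    and "norm ((1 / real n) *\<^sub>R (\<Sum>i<n. thresh lam (Xs i \<omega>)) - m)
      \<le> sqrt (2 * a * v * ln (1 / \<delta>) / real n) + sqrt (b * T / real n) + shrinkage_bias \<theta>
         + norm m * (1 + sqrt (a * ln (1 / \<delta>) / (2 * v * real n)) * norm m) * mean_shrinkage"
  using exists_unit_inner_eq_norm[of "(1 / real n) *\<^sub>R (\<Sum>i<n. thresh lam (Xs i \<omega>)) - m"]
    inner_deviation_le[OF assms] that by metis

lemma coef_div_eq:
  assumes "0 < p"
  shows "coef p / real n powr (p / 2) = psi_const p * lam powr p"
proof -
  define q where "q = 2 * ln (1 / \<delta>) / (a * v)"
  have "0 < q" "0 < real n"
    using ln_inverse_delta_pos a_ge_1 v_pos n_pos by (simp_all add: q_def)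
  have "lam = 1 / \<mu> * sqrt (q / real n)"
    by (simp add: lam_eq q_def field_simps)
  then have "lam powr p = (1 / \<mu>) powr p * (q powr (p / 2) / real n powr (p / 2))"
    using \<open>0 < q\<close> \<open>0 < real n\<close> mu_pos
    by (simp add: powr_mult powr_half_sqrt[symmetric] powr_powr powr_divide)
  moreover have "(p / ((p + 1) * \<mu>)) powr p = (p / (p + 1)) powr p * (1 / \<mu>) powr p"
    using assms mu_pos by (simp add: powr_mult[symmetric])
  ultimately show ?thesis
    by (simp add: coef_def q_def[symmetric] psi_const_def)
qed

lemma coef_nonneg: "0 < p \<Longrightarrow> 0 \<le> coef p"
  by (simp add: coef_def)

lemma mean_shrinkage_nonneg: "0 \<le> mean_shrinkage"
  unfolding mean_shrinkage_def by (intro integral_nonneg_AE AE_I2 shrinkage_nonneg lam_pos)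

lemma ennreal_shrinkage_bias_le_INF:
  assumes "norm \<theta> = 1"
  shows "ennreal (shrinkage_bias \<theta>)
    \<le> (INF p\<in>{1..}. ennreal (coef p) * (SUP \<theta>\<in>{\<theta>. norm \<theta> = 1}.
          \<integral>\<^sup>+ \<omega>. ennreal (norm (X \<omega>) powr p * negpart (\<theta> \<bullet> (X \<omega> - m))) \<partial>M) / ennreal (real n powr (p / 2)))"
proof (rule INF_greatest)
  fix p :: real
  assume "p \<in> {1..}"
  then have "0 < p" by simp
  have "ennreal (shrinkage_bias \<theta>)
      \<le> ennreal (psi_const p * lam powr p) * (\<integral>\<^sup>+ \<omega>. ennreal (norm (X \<omega>) powr p * negpart (\<theta> \<bullet> (X \<omega> - m))) \<partial>M)"
    unfolding shrinkage_bias_def by (rule integral_shrinkage_negpart_le[OF \<open>0 < p\<close>])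
  also have "\<dots> \<le> ennreal (psi_const p * lam powr p) * (SUP \<theta>\<in>{\<theta>. norm \<theta> = 1}.
          \<integral>\<^sup>+ \<omega>. ennreal (norm (X \<omega>) powr p * negpart (\<theta> \<bullet> (X \<omega> - m))) \<partial>M)"
    using assms by (intro mult_left_mono SUP_upper) auto
  also have "\<dots> = ennreal (coef p) * (SUP \<theta>\<in>{\<theta>. norm \<theta> = 1}.
          \<integral>\<^sup>+ \<omega>. ennreal (norm (X \<omega>) powr p * negpart (\<theta> \<bullet> (X \<omega> - m))) \<partial>M) / ennreal (real n powr (p / 2))"
    using \<open>0 < p\<close> n_pos by (subst ennreal_mult_divide_ennreal) (auto simp: coef_nonneg coef_div_eq)
  finally show "ennreal (shrinkage_bias \<theta>)
    \<le> ennreal (coef p) * (SUP \<theta>\<in>{\<theta>. norm \<theta> = 1}.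
          \<integral>\<^sup>+ \<omega>. ennreal (norm (X \<omega>) powr p * negpart (\<theta> \<bullet> (X \<omega> - m))) \<partial>M) / ennreal (real n powr (p / 2))" .
qed

lemma ennreal_mean_shrinkage_le_INF:
  assumes "0 \<le> K"
  shows "ennreal (K * mean_shrinkage)
    \<le> (INF p\<in>{2..}. ennreal (coef p) * (\<integral>\<^sup>+ \<omega>. ennreal (norm (X \<omega>) powr p) \<partial>M) * ennreal K
                       / ennreal (real n powr (p / 2)))"
proof (rule INF_greatest)
  fix p :: real
  assume "p \<in> {2..}"
  then have "0 < p" by simp
  have "ennreal (K * mean_shrinkage) = ennreal K * ennreal mean_shrinkage"
    using assms mean_shrinkage_nonneg by (simp add: ennreal_mult)
  also have "\<dots> \<le> ennreal K * (ennreal (psi_const p * lam powr p) * (\<integral>\<^sup>+ \<omega>. ennreal (norm (X \<omega>) powr p) \<partial>M))"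
    unfolding mean_shrinkage_def by (intro mult_left_mono integral_shrinkage_le[OF \<open>0 < p\<close>]) auto
  also have "\<dots> = ennreal (coef p) * (\<integral>\<^sup>+ \<omega>. ennreal (norm (X \<omega>) powr p) \<partial>M) * ennreal K
                  / ennreal (real n powr (p / 2))"
    using \<open>0 < p\<close> n_pos
    by (subst mult.assoc, subst ennreal_mult_divide_ennreal) (auto simp: coef_nonneg coef_div_eq mult_ac)
  finally show "ennreal (K * mean_shrinkage)
    \<le> ennreal (coef p) * (\<integral>\<^sup>+ \<omega>. ennreal (norm (X \<omega>) powr p) \<partial>M) * ennreal K
       / ennreal (real n powr (p / 2))" .
qed


lemma shrinkage_bias_nonneg: "0 \<le> shrinkage_bias \<theta>"
  unfolding shrinkage_bias_def negpart_def
  by (intro integral_nonneg_AE AE_I2 mult_nonneg_nonneg shrinkage_nonneg lam_pos) simp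

lemma ennreal_deviation_le:
  assumes "\<omega> \<in> good_event \<beta> \<delta>"
  shows "ennreal (norm ((1 / real n) *\<^sub>R (\<Sum>i<n. thresh lam (Xs i \<omega>)) - m))
    \<le> ennreal (sqrt (2 * a * v * ln (1 / \<delta>) / real n)) + ennreal (sqrt (b * T / real n))
      + (INF p\<in>{1..}. ennreal (coef p) * (SUP \<theta>\<in>{\<theta>. norm \<theta> = 1}.
           \<integral>\<^sup>+ \<omega>. ennreal (norm (X \<omega>) powr p * negpart (\<theta> \<bullet> (X \<omega> - m))) \<partial>M) / ennreal (real n powr (p / 2)))
      + (INF p\<in>{2..}. ennreal (coef p) * (\<integral>\<^sup>+ \<omega>. ennreal (norm (X \<omega>) powr p) \<partial>M)
           * ennreal (norm m * (1 + sqrt (a * ln (1 / \<delta>) / (2 * v * real n)) * norm m)) / ennreal (real n powr (p / 2)))"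
proof -
  define K where "K = norm m * (1 + sqrt (a * ln (1 / \<delta>) / (2 * v * real n)) * norm m)"
  have "0 \<le> K"
    using a_ge_1 ln_inverse_delta_pos v_pos by (simp add: K_def)
  obtain \<theta> where \<theta>: "norm \<theta> = 1"
    and dev: "norm ((1 / real n) *\<^sub>R (\<Sum>i<n. thresh lam (Xs i \<omega>)) - m)
      \<le> sqrt (2 * a * v * ln (1 / \<delta>) / real n) + sqrt (b * T / real n) + shrinkage_bias \<theta> + K * mean_shrinkage"
    using norm_deviation_le[OF assms] unfolding K_def by blast
  have "0 \<le> sqrt (2 * a * v * ln (1 / \<delta>) / real n)" "0 \<le> sqrt (b * T / real n)"
    using a_ge_1 v_pos ln_inverse_delta_pos b_ge_1 v_le_T by simp_all
  then have "ennreal (norm ((1 / real n) *\<^sub>R (\<Sum>i<n. thresh lam (Xs i \<omega>)) - m))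
      \<le> ennreal (sqrt (2 * a * v * ln (1 / \<delta>) / real n)) + ennreal (sqrt (b * T / real n))
        + ennreal (shrinkage_bias \<theta>) + ennreal (K * mean_shrinkage)"
    using dev \<open>0 \<le> K\<close> shrinkage_bias_nonneg mean_shrinkage_nonneg
    by (simp add: ennreal_plus[symmetric] del: ennreal_plus)
  also have "\<dots> \<le> ennreal (sqrt (2 * a * v * ln (1 / \<delta>) / real n)) + ennreal (sqrt (b * T / real n))
      + (INF p\<in>{1..}. ennreal (coef p) * (SUP \<theta>\<in>{\<theta>. norm \<theta> = 1}.
           \<integral>\<^sup>+ \<omega>. ennreal (norm (X \<omega>) powr p * negpart (\<theta> \<bullet> (X \<omega> - m))) \<partial>M) / ennreal (real n powr (p / 2)))
      + (INF p\<in>{2..}. ennreal (coef p) * (\<integral>\<^sup>+ \<omega>. ennreal (norm (X \<omega>) powr p) \<partial>M)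
           * ennreal K / ennreal (real n powr (p / 2)))"
    using ennreal_shrinkage_bias_le_INF[OF \<theta>] ennreal_mean_shrinkage_le_INF[OF \<open>0 \<le> K\<close>]
    by (intro add_mono order_refl)
  finally show ?thesis unfolding K_def .
qed

end

theorem proposition2p1:
  fixes M :: "'a measure"
    and X :: "'a \<Rightarrow> 'd::euclidean_space"
    and Xs :: "nat \<Rightarrow> 'a \<Rightarrow> 'd"
    and n :: nat and a lam T b :: real and mhat :: "'a \<Rightarrow> 'd"
    and coef :: "real \<Rightarrow> real" and C C' :: "real \<Rightarrow> ennreal" and B :: ennreal and \<delta> v \<mu> :: real and m :: 'd
  assumes P: "prob_space M"
    and X_meas: "X \<in> borel_measurable M"
    and X_sq: "integrable M (\<lambda>\<omega>. (norm (X \<omega>))\<^sup>2)"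
    and m_def: "m = (\<integral>\<omega>. X \<omega> \<partial>M)"
    and n_pos: "n \<ge> 1"
    and Xs_meas: "\<And>i. i < n \<Longrightarrow> Xs i \<in> borel_measurable M"
    and Xs_distr: "\<And>i. i < n \<Longrightarrow> distr M borel (Xs i) = distr M borel X"
    and Xs_indep: "prob_space.indep_vars M (\<lambda>_. borel) Xs {..<n}"
    and \<delta>: "0 < \<delta>" "\<delta> < 1"
    and v_pos: "0 < v"
    and v_bound: "\<forall>\<theta>::'d. norm \<theta> = 1 \<longrightarrow> (\<integral>\<omega>. (\<theta> \<bullet> (X \<omega> - m))\<^sup>2 \<partial>M) \<le> v"
    and \<mu>: "0 < \<mu>"
  assumes a_def: "a = g2 (2 * \<mu>)"
    and lam_def: "lam = (1 / \<mu>) * sqrt (2 * ln (1 / \<delta>) / (a * v * real n))"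
    and T_def: "T = max (\<integral>\<omega>. (norm (X \<omega> - m))\<^sup>2 \<partial>M) v"
    and b_def: "b = exp (2 * \<mu>) * g1 (\<mu>\<^sup>2 * sqrt (2 * a * v / (T * ln (1 / \<delta>))))"
    and mhat_def: "mhat = (\<lambda>\<omega>. (1 / real n) *\<^sub>R (\<Sum>i<n. thresh lam (Xs i \<omega>)))"
    and coef_def: "coef = (\<lambda>p::real. 1 / (p + 1) * (p / ((p + 1) * \<mu>)) powr p
                    * (2 * ln (1 / \<delta>) / (a * v)) powr (p / 2))"
    and C_def: "C = (\<lambda>p::real. ennreal (coef p) *
                 (SUP \<theta>\<in>{\<theta>::'d. norm \<theta> = 1}.
                    \<integral>\<^sup>+\<omega>. ennreal (norm (X \<omega>) powr p * negpart (\<theta> \<bullet> (X \<omega> - m))) \<partial>M))"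
    and Cp_def: "C' = (\<lambda>p::real. ennreal (coef p) *
                 (\<integral>\<^sup>+\<omega>. ennreal (norm (X \<omega>) powr p) \<partial>M) *
                 ennreal (norm m * (1 + sqrt (a * ln (1 / \<delta>) / (2 * v * real n)) * norm m)))"
    and B_def: "B = ennreal (sqrt (2 * a * v * ln (1 / \<delta>) / real n)) + ennreal (sqrt (b * T / real n))
             + (INF p\<in>{1..}. C p / ennreal (real n powr (p / 2)))
             + (INF p\<in>{2..}. C' p / ennreal (real n powr (p / 2)))"
  shows "measure M {\<omega> \<in> space M. ennreal (norm (mhat \<omega> - m)) \<le> B} \<ge> 1 - \<delta>"
proof -
  have "0 < lam"
    using \<delta> v_pos n_pos \<mu> g2_ge_1[of "2 * \<mu>"] by (simp add: lam_def a_def)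
  interpret E: thresholded_mean_estimation M X Xs n lam \<delta> v \<mu> a T b m
    by (intro thresholded_mean_estimation.intro thresholded_sample_L2.intro thresholded_sample.intro
        thresholded_sample_axioms.intro thresholded_sample_L2_axioms.intro thresholded_mean_estimation_axioms.intro)
      fact+
  have "coef = E.coef"
    by (simp add: coef_def E.coef_def fun_eq_iff)
  then have "E.good_event E.\<beta> \<delta> \<subseteq> {\<omega> \<in> space M. ennreal (norm (mhat \<omega> - m)) \<le> B}"
    using E.ennreal_deviation_le unfolding B_def C_def Cp_def mhat_def E.good_event_def by auto
  moreover have "mhat \<in> borel_measurable M"
    unfolding mhat_def using Xs_meas by (intro borel_measurable_scaleR borel_measurable_sum) auto
  ultimately have "E.prob (E.good_event E.\<beta> \<delta>) \<le> E.prob {\<omega> \<in> space M. ennreal (norm (mhat \<omega> - m)) \<le> B}"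
    by (intro E.finite_measure_mono) measurable
  then show ?thesis
    using E.prob_good_event[OF E.beta_pos \<delta>(1)] by linarith
qed

end
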